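(* Suppose the group $\Gamma$ admits a splitting $\Gamma=A\ast B$ with finite non-trivial factors $A,B$. Then the subspace $S\subset\mathrm{H}^2_\mathrm{b}(\Gamma,\mathbb{R})$ of split classes is independent of the choice of a splitting of $\Gamma$ (as a free product of two non-trivial groups).
   Context: For a splitting $\Gamma=A\ast B$, each non-trivial element has a unique normal form $a_1b_1\cdots a_nb_n$ ($a_i\in A$, $b_i\in B$, all non-trivial except possibly $a_1$ or $b_n$), and for bounded alternating functions ($f(x^{-1})=-f(x)$) $f_A:A\to\mathbb{R}$, $f_B:B\to\mathbb{R}$ the split quasimorphism is $(f_A\ast f_B)(1)=0$, $(f_A\ast f_B)(a_1b_1\cdots a_nb_n)=f_A(a_1)+f_B(b_1)+\dots+f_A(a_n)+f_B(b_n)$. The space of split classes $S$ of the splitting is the set of bounded cohomology classes $\omega_{f_A\ast f_B}\in\mathrm{H}^2_\mathrm{b}(\Gamma,\mathbb{R})$, where $\omega_f$ is the class of $\partial f(g,h)=f(g)+f(h)-f(gh)$. *)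

theory Defs
  imports Complex_Main "HOL-Algebra.Group"
begin

text \<open>This is exactly the normal form a1 b1 ... an bn where a1 or bn may be absent.\<close>

definition reduced_word :: "('a, 'b) monoid_scheme \<Rightarrow> 'a set \<Rightarrow> 'a set \<Rightarrow> 'a list \<Rightarrow> bool" where
  "reduced_word G A B ws \<longleftrightarrow>
     set ws \<subseteq> (A \<union> B) - {\<one>\<^bsub>G\<^esub>} \<and>
     (\<forall>i. Suc i < length ws \<longrightarrow>
        \<not> (ws ! i \<in> A \<and> ws ! Suc i \<in> A) \<and> \<not> (ws ! i \<in> B \<and> ws ! Suc i \<in> B))"

definition word_prod :: "('a, 'b) monoid_scheme \<Rightarrow> 'a list \<Rightarrow> 'a" where
  "word_prod G ws = foldr (\<lambda>x y. x \<otimes>\<^bsub>G\<^esub> y) ws \<one>\<^bsub>G\<^esub>"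

text \<open>G = A * B as an (internal) free product of two non-trivial subgroups:
every element has a unique normal form.\<close>

definition is_splitting :: "('a, 'b) monoid_scheme \<Rightarrow> 'a set \<Rightarrow> 'a set \<Rightarrow> bool" where
  "is_splitting G A B \<longleftrightarrow>
     subgroup A G \<and> subgroup B G \<and> A \<inter> B = {\<one>\<^bsub>G\<^esub>} \<and>
     A \<noteq> {\<one>\<^bsub>G\<^esub>} \<and> B \<noteq> {\<one>\<^bsub>G\<^esub>} \<and>
     (\<forall>g \<in> carrier G. \<exists>!ws. reduced_word G A B ws \<and> word_prod G ws = g)"

definition normal_form :: "('a, 'b) monoid_scheme \<Rightarrow> 'a set \<Rightarrow> 'a set \<Rightarrow> 'a \<Rightarrow> 'a list" where
  "normal_form G A B g = (THE ws. reduced_word G A B ws \<and> word_prod G ws = g)"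

definition bounded_alternating :: "('a, 'b) monoid_scheme \<Rightarrow> 'a set \<Rightarrow> ('a \<Rightarrow> real) \<Rightarrow> bool" where
  "bounded_alternating G H f \<longleftrightarrow>
     (\<exists>M. \<forall>x\<in>H. \<bar>f x\<bar> \<le> M) \<and> (\<forall>x\<in>H. f (inv\<^bsub>G\<^esub> x) = - f x)"

text \<open>The split quasimorphism f_A * f_B (value 0 at 1, since the normal form of 1 is empty).\<close>

definition split_qm :: "('a, 'b) monoid_scheme \<Rightarrow> 'a set \<Rightarrow> 'a set \<Rightarrow> ('a \<Rightarrow> real) \<Rightarrow> ('a \<Rightarrow> real) \<Rightarrow> 'a \<Rightarrow> real" where
  "split_qm G A B fA fB g =
     sum_list (map (\<lambda>x. if x \<in> A then fA x else fB x) (normal_form G A B g))"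

definition qm_coboundary :: "('a, 'b) monoid_scheme \<Rightarrow> ('a \<Rightarrow> real) \<Rightarrow> 'a \<Rightarrow> 'a \<Rightarrow> real" where
  "qm_coboundary G f = (\<lambda>g h. f g + f h - f (g \<otimes>\<^bsub>G\<^esub> h))"

text \<open>The class in H^2_b(G,R) of a (bounded inhomogeneous) 2-cochain c: the set of all
2-cochains differing from c (on the carrier) by the coboundary of a bounded 1-cochain.\<close>

definition bclass :: "('a, 'b) monoid_scheme \<Rightarrow> ('a \<Rightarrow> 'a \<Rightarrow> real) \<Rightarrow> ('a \<Rightarrow> 'a \<Rightarrow> real) set" where
  "bclass G c = {c'. \<exists>u :: 'a \<Rightarrow> real. (\<exists>M. \<forall>x\<in>carrier G. \<bar>u x\<bar> \<le> M) \<and>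
       (\<forall>x\<in>carrier G. \<forall>y\<in>carrier G. c' x y = c x y + (u x + u y - u (x \<otimes>\<^bsub>G\<^esub> y)))}"

definition omega :: "('a, 'b) monoid_scheme \<Rightarrow> ('a \<Rightarrow> real) \<Rightarrow> ('a \<Rightarrow> 'a \<Rightarrow> real) set" where
  "omega G f = bclass G (qm_coboundary G f)"

definition split_classes :: "('a, 'b) monoid_scheme \<Rightarrow> 'a set \<Rightarrow> 'a set \<Rightarrow> ('a \<Rightarrow> 'a \<Rightarrow> real) set set" where
  "split_classes G A B =
     {omega G (split_qm G A B fA fB) | fA fB.
        bounded_alternating G A fA \<and> bounded_alternating G B fB}"

end

theory Submission
  imports Defs "HOL-Algebra.Multiplicative_Group"
begin

text \<open>
  A finite subgroup of a free product is conjugate into one of the factors: conjugating by the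
  first letter of a finite-order element of syllable length at least two shortens it, and for a
  finite subgroup all such elements start with the same letter.  Hence, if \<open>\<Gamma> = A * B\<close> with \<open>A\<close>,
  \<open>B\<close> finite and \<open>\<Gamma> = A' * B'\<close>, then \<open>A\<close> and \<open>B\<close> lie in conjugates of \<open>A'\<close> or \<open>B'\<close>; the
  retraction \<open>\<Gamma> \<rightarrow> A\<close> killing \<open>B\<close> shows that they lie in conjugates of different factors and
  that the inclusions are equalities, and a normal form computation shows that the two
  conjugators can be chosen equal.  So \<open>{A', B'} = {kAk\<inverse>, kBk\<inverse>}\<close>.  Conjugation by \<open>k\<close> carries
  normal forms to normal forms, so every split quasimorphism of the second splitting is one of
  the first composed with an inner automorphism; since left multiplication by a fixed element
  changes a split quasimorphism by a bounded amount, the two differ by a bounded function and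
  define the same class.
\<close>

lemma adjacent_pairs_Cons:
  "(\<forall>i. Suc i < length (x#ws) \<longrightarrow> P ((x#ws)!i) ((x#ws)!Suc i)) \<longleftrightarrow>
   ((ws \<noteq> [] \<longrightarrow> P x (hd ws)) \<and> (\<forall>i. Suc i < length ws \<longrightarrow> P (ws!i) (ws!Suc i)))"
  by (cases ws) (auto simp: All_less_Suc2 hd_conv_nth)

lemma reduced_word_Nil [simp]: "reduced_word G A B []"
  by (simp add: reduced_word_def)

lemma reduced_word_Cons:
  "reduced_word G A B (x#ws) \<longleftrightarrow> x \<in> (A \<union> B) - {\<one>\<^bsub>G\<^esub>} \<and> reduced_word G A B ws \<and>
     (ws \<noteq> [] \<longrightarrow> \<not> (x \<in> A \<and> hd ws \<in> A) \<and> \<not> (x \<in> B \<and> hd ws \<in> B))"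
  unfolding reduced_word_def
  using adjacent_pairs_Cons[of x ws "\<lambda>u v. \<not> (u \<in> A \<and> v \<in> A) \<and> \<not> (u \<in> B \<and> v \<in> B)"]
  by auto

lemma reduced_word_append:
  "reduced_word G A B (u@w) \<longleftrightarrow> reduced_word G A B u \<and> reduced_word G A B w \<and>
     (u \<noteq> [] \<longrightarrow> w \<noteq> [] \<longrightarrow> \<not> (last u \<in> A \<and> hd w \<in> A) \<and> \<not> (last u \<in> B \<and> hd w \<in> B))"
proof (induction u)
  case (Cons x u)
  show ?case
  proof (cases "u = []")
    case False
    then have "hd (u@w) = hd u" "last (x#u) = last u" by auto
    with False show ?thesis by (simp only: append_Cons reduced_word_Cons Cons.IH) auto
  qed (simp add: reduced_word_Cons)
qed simp

lemma reduced_word_singleton: "reduced_word G A B [x] \<longleftrightarrow> x \<in> (A \<union> B) - {\<one>\<^bsub>G\<^esub>}"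
  by (simp add: reduced_word_Cons)

lemma reduced_word_hd_letter:
  "reduced_word G A B w \<Longrightarrow> w \<noteq> [] \<Longrightarrow> hd w \<in> (A \<union> B) - {\<one>\<^bsub>G\<^esub>}"
  by (cases w) (auto simp: reduced_word_Cons)

lemma reduced_word_last_letter:
  "reduced_word G A B w \<Longrightarrow> w \<noteq> [] \<Longrightarrow> last w \<in> (A \<union> B) - {\<one>\<^bsub>G\<^esub>}"
  unfolding reduced_word_def using last_in_set by blast

lemma reduced_word_Cons_snoc:
  assumes "reduced_word G A B (s # m @ [t])"
  shows "s \<in> (A \<union> B) - {\<one>\<^bsub>G\<^esub>}" "t \<in> (A \<union> B) - {\<one>\<^bsub>G\<^esub>}" "reduced_word G A B m"
    "m \<noteq> [] \<Longrightarrow> \<not> (s \<in> A \<and> hd m \<in> A) \<and> \<not> (s \<in> B \<and> hd m \<in> B)"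
    "m \<noteq> [] \<Longrightarrow> \<not> (last m \<in> A \<and> t \<in> A) \<and> \<not> (last m \<in> B \<and> t \<in> B)"
    "m = [] \<Longrightarrow> \<not> (s \<in> A \<and> t \<in> A) \<and> \<not> (s \<in> B \<and> t \<in> B)"
  using assms by (auto simp: reduced_word_Cons reduced_word_append reduced_word_singleton
      hd_append split: if_splits)

lemma reduced_word_replicate:
  assumes rw: "reduced_word G A B w" and ne: "w \<noteq> []"
    and ends: "\<not> (last w \<in> A \<and> hd w \<in> A) \<and> \<not> (last w \<in> B \<and> hd w \<in> B)"
  shows "reduced_word G A B (concat (replicate n w))"
proof (induction n)
  case (Suc n)
  have "concat (replicate n w) \<noteq> [] \<Longrightarrow> hd (concat (replicate n w)) = hd w"
    using ne by (cases n) auto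
  then show ?case using rw ends Suc.IH by (simp add: reduced_word_append)
qed simp

lemma reduced_word_swap: "reduced_word G A B = reduced_word G B A"
  by (auto simp: reduced_word_def fun_eq_iff)

lemma normal_form_swap: "normal_form G A B = normal_form G B A"
  by (simp add: normal_form_def reduced_word_swap fun_eq_iff)

lemma is_splitting_swap: "is_splitting G A B \<Longrightarrow> is_splitting G B A"
  unfolding is_splitting_def by (auto simp: reduced_word_swap)

lemma word_prod_Nil [simp]: "word_prod G [] = \<one>\<^bsub>G\<^esub>"
  by (simp add: word_prod_def)

lemma word_prod_Cons [simp]: "word_prod G (x#w) = x \<otimes>\<^bsub>G\<^esub> word_prod G w"
  by (simp add: word_prod_def)

definition inv_word :: "('a,'b) monoid_scheme \<Rightarrow> 'a list \<Rightarrow> 'a list" where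
  "inv_word G w = rev (map (\<lambda>x. inv\<^bsub>G\<^esub> x) w)"

lemma inv_word_Cons: "inv_word G (x#w) = inv_word G w @ [inv\<^bsub>G\<^esub> x]"
  by (simp add: inv_word_def)

lemma hd_inv_word: "w \<noteq> [] \<Longrightarrow> hd (inv_word G w) = inv\<^bsub>G\<^esub> (last w)"
  by (simp add: inv_word_def hd_rev last_map)

lemma last_inv_word: "w \<noteq> [] \<Longrightarrow> last (inv_word G w) = inv\<^bsub>G\<^esub> (hd w)"
  by (simp add: inv_word_def last_rev hd_map)

definition conjugate :: "('a,'b) monoid_scheme \<Rightarrow> 'a \<Rightarrow> 'a \<Rightarrow> 'a" where
  "conjugate G k x = k \<otimes>\<^bsub>G\<^esub> x \<otimes>\<^bsub>G\<^esub> inv\<^bsub>G\<^esub> k"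

context group
begin

lemma word_prod_closed: "set w \<subseteq> carrier G \<Longrightarrow> word_prod G w \<in> carrier G"
  by (induction w) auto

lemma word_prod_append:
  "set u \<subseteq> carrier G \<Longrightarrow> set w \<subseteq> carrier G \<Longrightarrow> word_prod G (u@w) = word_prod G u \<otimes> word_prod G w"
  by (induction u) (auto simp: m_assoc word_prod_closed)

lemma word_prod_in_subgroup: "subgroup H G \<Longrightarrow> set w \<subseteq> H \<Longrightarrow> word_prod G w \<in> H"
  by (induction w) (auto intro: subgroup.m_closed subgroup.one_closed)

lemma word_prod_inv_word: "set w \<subseteq> carrier G \<Longrightarrow> word_prod G (inv_word G w) = inv (word_prod G w)"
proof (induction w)
  case (Cons x w)
  then have "word_prod G (inv_word G (x#w)) = word_prod G (inv_word G w) \<otimes> inv x"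
    unfolding inv_word_Cons by (subst word_prod_append) (auto simp: inv_word_def)
  with Cons show ?case by (simp add: inv_mult_group word_prod_closed)
qed (simp add: inv_word_def)

lemma word_prod_replicate:
  assumes "set w \<subseteq> carrier G"
  shows "word_prod G (concat (replicate n w)) = word_prod G w [^] n"
proof (induction n)
  case (Suc n)
  have "set (concat (replicate n w)) \<subseteq> carrier G" using assms by auto
  then show ?case
    using Suc assms nat_pow_Suc2[OF word_prod_closed[OF assms], of n] by (simp add: word_prod_append)
qed simp

lemma inv_mult_cancel_left [simp]: "x \<in> carrier G \<Longrightarrow> y \<in> carrier G \<Longrightarrow> inv x \<otimes> (x \<otimes> y) = y"
  by (simp add: m_assoc[symmetric])

lemma mult_inv_cancel_left [simp]: "x \<in> carrier G \<Longrightarrow> y \<in> carrier G \<Longrightarrow> x \<otimes> (inv x \<otimes> y) = y"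
  by (simp add: m_assoc[symmetric])

lemma conjugate_closed [simp]: "k \<in> carrier G \<Longrightarrow> x \<in> carrier G \<Longrightarrow> conjugate G k x \<in> carrier G"
  by (simp add: conjugate_def)

lemma conjugate_mult:
  "k \<in> carrier G \<Longrightarrow> x \<in> carrier G \<Longrightarrow> y \<in> carrier G \<Longrightarrow>
    conjugate G k x \<otimes> conjugate G k y = conjugate G k (x \<otimes> y)"
  by (simp add: conjugate_def m_assoc)

lemma inv_conjugate: "k \<in> carrier G \<Longrightarrow> x \<in> carrier G \<Longrightarrow> inv (conjugate G k x) = conjugate G k (inv x)"
  by (simp add: conjugate_def m_assoc inv_mult_group)

lemma conjugate_one [simp]: "k \<in> carrier G \<Longrightarrow> conjugate G k \<one> = \<one>"
  by (simp add: conjugate_def)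

lemma conjugate_by_one [simp]: "x \<in> carrier G \<Longrightarrow> conjugate G \<one> x = x"
  by (simp add: conjugate_def)

lemma conjugate_conjugate:
  "k \<in> carrier G \<Longrightarrow> l \<in> carrier G \<Longrightarrow> x \<in> carrier G \<Longrightarrow>
    conjugate G k (conjugate G l x) = conjugate G (k \<otimes> l) x"
  by (simp add: conjugate_def m_assoc inv_mult_group)

lemma conjugate_inv_conjugate [simp]:
  "k \<in> carrier G \<Longrightarrow> x \<in> carrier G \<Longrightarrow> conjugate G (inv k) (conjugate G k x) = x"
  by (simp add: conjugate_def m_assoc)

lemma conjugate_conjugate_inv [simp]:
  "k \<in> carrier G \<Longrightarrow> x \<in> carrier G \<Longrightarrow> conjugate G k (conjugate G (inv k) x) = x"
  by (simp add: conjugate_def m_assoc)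

lemma inj_on_conjugate: "k \<in> carrier G \<Longrightarrow> inj_on (conjugate G k) (carrier G)"
  by (metis conjugate_inv_conjugate inj_onI)

lemma conjugate_eq_one_iff: "k \<in> carrier G \<Longrightarrow> u \<in> carrier G \<Longrightarrow> conjugate G k u = \<one> \<longleftrightarrow> u = \<one>"
  by (metis conjugate_inv_conjugate conjugate_one inv_closed)

lemma conjugate_mem_image_iff:
  "k \<in> carrier G \<Longrightarrow> X \<subseteq> carrier G \<Longrightarrow> u \<in> carrier G \<Longrightarrow>
    conjugate G k u \<in> conjugate G k ` X \<longleftrightarrow> u \<in> X"
  using inj_on_image_mem_iff[OF inj_on_conjugate] by blast

lemma conjugate_pow:
  "k \<in> carrier G \<Longrightarrow> x \<in> carrier G \<Longrightarrow> conjugate G k x [^] (n::nat) = conjugate G k (x [^] n)"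
  by (induction n) (simp_all add: conjugate_mult)

lemma conjugate_in_subgroup: "subgroup K G \<Longrightarrow> k \<in> K \<Longrightarrow> x \<in> K \<Longrightarrow> conjugate G k x \<in> K"
  unfolding conjugate_def by (intro subgroup.m_closed subgroup.m_inv_closed) auto

lemma conjugate_image_conjugate_image:
  assumes "k \<in> carrier G" "l \<in> carrier G" "X \<subseteq> carrier G"
  shows "conjugate G k ` conjugate G l ` X = conjugate G (k \<otimes> l) ` X"
  unfolding image_comp using assms conjugate_conjugate by (intro image_cong) (auto simp: subset_iff)

lemma conjugate_inv_image:
  assumes "k \<in> carrier G" "X \<subseteq> carrier G"
  shows "conjugate G (inv k) ` conjugate G k ` X = X"
proof -
  have "conjugate G (inv k) ` conjugate G k ` X = (\<lambda>x. x) ` X"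
    unfolding image_comp using assms by (intro image_cong) (auto simp: subset_iff)
  then show ?thesis by simp
qed

lemma conjugate_by_one_image:
  assumes "X \<subseteq> carrier G"
  shows "conjugate G \<one> ` X = X"
proof -
  have "conjugate G \<one> ` X = (\<lambda>x. x) ` X" using assms by (intro image_cong) auto
  then show ?thesis by simp
qed

lemma conjugate_image_subgroup:
  assumes K: "subgroup K G" and a: "a \<in> K"
  shows "conjugate G a ` K = K"
proof
  show "conjugate G a ` K \<subseteq> K" using conjugate_in_subgroup[OF K a] by blast
  show "K \<subseteq> conjugate G a ` K"
  proof
    fix x assume x: "x \<in> K"
    have "inv a \<in> K" using subgroup.m_inv_closed[OF K a] .
    then have "conjugate G (inv a) x \<in> K" using conjugate_in_subgroup[OF K _ x] by blast
    moreover have "x = conjugate G a (conjugate G (inv a) x)"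
      using a x subgroup.mem_carrier[OF K] by simp
    ultimately show "x \<in> conjugate G a ` K" by blast
  qed
qed

lemma subgroup_conjugate_image:
  assumes H: "subgroup H G" and k: "k \<in> carrier G"
  shows "subgroup (conjugate G k ` H) G"
proof (rule subgroupI)
  have Hc: "\<And>x. x \<in> H \<Longrightarrow> x \<in> carrier G" using subgroup.mem_carrier[OF H] .
  show "conjugate G k ` H \<subseteq> carrier G" using k Hc by auto
  show "conjugate G k ` H \<noteq> {}" using subgroup.one_closed[OF H] by blast
  show "inv a \<in> conjugate G k ` H" if a: "a \<in> conjugate G k ` H" for a
  proof -
    obtain x where "x \<in> H" "a = conjugate G k x" using a by blast
    then show ?thesis using inv_conjugate[OF k Hc] subgroup.m_inv_closed[OF H] by auto
  qed
  show "a \<otimes> b \<in> conjugate G k ` H" if ab: "a \<in> conjugate G k ` H" "b \<in> conjugate G k ` H" for a b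
  proof -
    obtain x y where "x \<in> H" "y \<in> H" "a = conjugate G k x" "b = conjugate G k y"
      using ab by blast
    then show ?thesis using conjugate_mult[OF k Hc Hc] subgroup.m_closed[OF H] by auto
  qed
qed

lemma word_prod_map_conjugate:
  "k \<in> carrier G \<Longrightarrow> set w \<subseteq> carrier G \<Longrightarrow> word_prod G (map (conjugate G k) w) = conjugate G k (word_prod G w)"
  by (induction w) (simp_all add: conjugate_mult word_prod_closed)

lemma reduced_word_map_conjugate:
  assumes r: "reduced_word G X Y w" and k: "k \<in> carrier G"
    and X: "X \<subseteq> carrier G" and Y: "Y \<subseteq> carrier G"
  shows "reduced_word G (conjugate G k ` X) (conjugate G k ` Y) (map (conjugate G k) w)"
proof -
  have wc: "set w \<subseteq> carrier G" using r X Y unfolding reduced_word_def by blast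
  have mem: "conjugate G k u \<in> conjugate G k ` Z \<longleftrightarrow> u \<in> Z" if "u \<in> set w" "Z \<subseteq> carrier G" for u Z
    using conjugate_mem_image_iff[OF k] that wc by blast
  have "set (map (conjugate G k) w) \<subseteq> (conjugate G k ` X \<union> conjugate G k ` Y) - {\<one>}"
  proof
    fix z assume "z \<in> set (map (conjugate G k) w)"
    then obtain u where u: "u \<in> set w" "z = conjugate G k u" by auto
    then have "u \<in> (X \<union> Y) - {\<one>}" using r unfolding reduced_word_def by blast
    then show "z \<in> (conjugate G k ` X \<union> conjugate G k ` Y) - {\<one>}"
      using u wc conjugate_eq_one_iff[OF k] by auto
  qed
  moreover have "\<not> (map (conjugate G k) w ! i \<in> conjugate G k ` Z \<and> map (conjugate G k) w ! Suc i \<in> conjugate G k ` Z)"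
    if i: "Suc i < length w" and Z: "Z = X \<or> Z = Y" for i Z
  proof -
    have Zc: "Z \<subseteq> carrier G" using Z X Y by blast
    have "map (conjugate G k) w ! j \<in> conjugate G k ` Z \<longleftrightarrow> w ! j \<in> Z" if "j < length w" for j
      using mem[OF _ Zc] that by simp
    moreover have "\<not> (w ! i \<in> Z \<and> w ! Suc i \<in> Z)" using r i Z unfolding reduced_word_def by blast
    ultimately show ?thesis using i by simp
  qed
  ultimately show ?thesis unfolding reduced_word_def by simp
qed

lemma ord_ne_0_in_finite_subgroup:
  assumes H: "subgroup H G" and fin: "finite H" and h: "h \<in> H"
  shows "ord h \<noteq> 0"
proof -
  have "carrier (subgroup_generated G {h}) \<subseteq> H"
    using subgroup_generated_minimal[OF H] h by blast
  then have "finite (carrier (subgroup_generated G {h}))" using fin by (rule finite_subset)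
  then show ?thesis using finite_cyclic_subgroup_order[OF subgroup.mem_carrier[OF H h]] by simp
qed

lemma ord_conjugate_ne_0:
  assumes k: "k \<in> carrier G" and x: "x \<in> carrier G" and "ord x \<noteq> 0"
  shows "ord (conjugate G k x) \<noteq> 0"
proof -
  obtain n :: nat where "n \<noteq> 0" "x [^] n = \<one>" using ord_eq_0[OF x] \<open>ord x \<noteq> 0\<close> by blast
  then show ?thesis using ord_eq_0[of "conjugate G k x"] k x by (auto simp: conjugate_pow)
qed

end

section \<open>Normal forms in a free product\<close>

locale free_splitting = group G for G (structure) +
  fixes A B
  assumes splitting: "is_splitting G A B"
begin

abbreviation letters :: "'a set" where
  "letters \<equiv> (A \<union> B) - {\<one>}"

lemma subgroup_A: "subgroup A G" and subgroup_B: "subgroup B G" and A_Int_B: "A \<inter> B = {\<one>}"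
  and A_nontrivial: "A \<noteq> {\<one>}" and B_nontrivial: "B \<noteq> {\<one>}"
  and unique_normal_form: "g \<in> carrier G \<Longrightarrow> \<exists>!ws. reduced_word G A B ws \<and> word_prod G ws = g"
  using splitting unfolding is_splitting_def by auto

lemma A_subset: "A \<subseteq> carrier G"
  using subgroup_A subgroup.subset by blast

lemma B_subset: "B \<subseteq> carrier G"
  using subgroup_B subgroup.subset by blast

lemma free_splitting_swap: "free_splitting G B A"
  by (simp add: free_splitting_def free_splitting_axioms_def is_group is_splitting_swap splitting)

lemma letter_closed: "s \<in> letters \<Longrightarrow> s \<in> carrier G"
  using A_subset B_subset by blast

lemma letter_in_A_iff: "x \<in> letters \<Longrightarrow> x \<in> A \<longleftrightarrow> x \<notin> B"
  using A_Int_B by auto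

lemma different_factors_iff:
  assumes "x \<in> letters" "y \<in> letters"
  shows "(\<not> (x \<in> A \<and> y \<in> A) \<and> \<not> (x \<in> B \<and> y \<in> B)) \<longleftrightarrow> \<not> (x \<in> A \<longleftrightarrow> y \<in> A)"
  using letter_in_A_iff[OF assms(1)] letter_in_A_iff[OF assms(2)] by blast

lemma inv_in_A_iff: "x \<in> carrier G \<Longrightarrow> inv x \<in> A \<longleftrightarrow> x \<in> A"
  using subgroup_A by (metis inv_inv subgroup.m_inv_closed)

lemma inv_in_B_iff: "x \<in> carrier G \<Longrightarrow> inv x \<in> B \<longleftrightarrow> x \<in> B"
  using subgroup_B by (metis inv_inv subgroup.m_inv_closed)

lemma inv_letter:
  assumes x: "x \<in> letters"
  shows "inv x \<in> letters" "inv x \<in> A \<longleftrightarrow> x \<in> A"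
  using x letter_closed[OF x] inv_in_A_iff inv_in_B_iff by auto

lemma letter_mult_same_factor:
  assumes s: "s \<in> letters" and t: "t \<in> letters"
    and st: "s \<in> A \<longleftrightarrow> t \<in> A" and ne: "s \<otimes> t \<noteq> \<one>"
  shows "s \<otimes> t \<in> letters \<and> (s \<otimes> t \<in> A \<longleftrightarrow> s \<in> A) \<and> (s \<otimes> t \<in> B \<longleftrightarrow> s \<in> B)"
proof (cases "s \<in> A")
  case True
  then have "s \<otimes> t \<in> A" using st subgroup.m_closed[OF subgroup_A] by blast
  then show ?thesis using ne True letter_in_A_iff[OF s] A_Int_B by blast
next
  case False
  then have "s \<in> B" "t \<in> B" using s t st by auto
  then have "s \<otimes> t \<in> B" using subgroup.m_closed[OF subgroup_B] by blast
  then show ?thesis using ne False \<open>s \<in> B\<close> A_Int_B by blast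
qed

lemma reduced_word_closed: "reduced_word G A B w \<Longrightarrow> set w \<subseteq> carrier G"
  using A_subset B_subset by (auto simp: reduced_word_def)

lemma normal_form_spec:
  "g \<in> carrier G \<Longrightarrow> reduced_word G A B (normal_form G A B g) \<and> word_prod G (normal_form G A B g) = g"
  unfolding normal_form_def using unique_normal_form by (rule theI')

lemma normal_form_reduced: "g \<in> carrier G \<Longrightarrow> reduced_word G A B (normal_form G A B g)"
  using normal_form_spec by blast

lemma word_prod_normal_form: "g \<in> carrier G \<Longrightarrow> word_prod G (normal_form G A B g) = g"
  using normal_form_spec by blast

lemma normal_form_closed: "g \<in> carrier G \<Longrightarrow> set (normal_form G A B g) \<subseteq> carrier G"
  using normal_form_reduced reduced_word_closed by blast

lemma normal_form_eq:
  assumes r: "reduced_word G A B w" and e: "word_prod G w = g"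
  shows "normal_form G A B g = w"
proof -
  have "g \<in> carrier G" using e word_prod_closed[OF reduced_word_closed[OF r]] by simp
  then show ?thesis unfolding normal_form_def
    by (rule the1_equality[OF unique_normal_form]) (use r e in auto)
qed

lemma normal_form_word_prod: "reduced_word G A B w \<Longrightarrow> normal_form G A B (word_prod G w) = w"
  using normal_form_eq by blast

lemma normal_form_one: "normal_form G A B \<one> = []"
  using normal_form_eq[of "[]"] by simp

lemma normal_form_letter: "x \<in> letters \<Longrightarrow> normal_form G A B x = [x]"
  using normal_form_eq[of "[x]" x] letter_closed by (auto simp: reduced_word_singleton)

lemma letter_induct [consumes 1, case_names one step]:
  assumes g: "g \<in> carrier G" and one: "P \<one>"
    and step: "\<And>s x. s \<in> letters \<Longrightarrow> x \<in> carrier G \<Longrightarrow> P x \<Longrightarrow> P (s \<otimes> x)"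
  shows "P g"
proof -
  have "P (word_prod G w)" if "reduced_word G A B w" for w
    using that
  proof (induction w)
    case (Cons s w)
    then show ?case using step word_prod_closed reduced_word_closed by (simp add: reduced_word_Cons)
  qed (simp add: one)
  then show ?thesis using normal_form_spec[OF g] by metis
qed

lemma reduced_word_inv_word:
  assumes "reduced_word G A B w"
  shows "reduced_word G A B (inv_word G w)"
  using assms
proof (induction w)
  case (Cons x w)
  have xl: "x \<in> letters" and rw: "reduced_word G A B w"
    and ends: "w \<noteq> [] \<longrightarrow> \<not> (x \<in> A \<and> hd w \<in> A) \<and> \<not> (x \<in> B \<and> hd w \<in> B)"
    using Cons.prems by (auto simp: reduced_word_Cons)
  have "\<not> (inv (hd w) \<in> A \<and> inv x \<in> A) \<and> \<not> (inv (hd w) \<in> B \<and> inv x \<in> B)" if "w \<noteq> []"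
    using ends that letter_closed[OF xl] reduced_word_hd_letter[OF rw that] letter_closed
      inv_in_A_iff inv_in_B_iff by metis
  moreover have "last (inv_word G w) = inv (hd w)" if "w \<noteq> []"
    using last_inv_word[where G=G, OF that] .
  ultimately show ?case
    using Cons.IH[OF rw] inv_letter(1)[OF xl]
    by (auto simp: inv_word_Cons reduced_word_append reduced_word_singleton inv_word_def)
qed (simp add: inv_word_def)

lemma normal_form_inv: "g \<in> carrier G \<Longrightarrow> normal_form G A B (inv g) = inv_word G (normal_form G A B g)"
  using normal_form_eq reduced_word_inv_word normal_form_reduced word_prod_inv_word
    normal_form_closed word_prod_normal_form by metis

lemma normal_form_letter_mult:
  assumes s: "s \<in> letters" and rw: "reduced_word G A B w"
  shows "normal_form G A B (s \<otimes> word_prod G w) =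
    (if w = [] then [s] else if (s \<in> A \<longleftrightarrow> hd w \<in> A) then
       (if s \<otimes> hd w = \<one> then tl w else (s \<otimes> hd w) # tl w) else s # w)"
proof (cases w)
  case Nil
  then show ?thesis using s normal_form_letter letter_closed by auto
next
  case (Cons y w')
  have sc: "s \<in> carrier G" using letter_closed[OF s] .
  have yl: "y \<in> letters" and rw': "reduced_word G A B w'"
    and ends: "w' \<noteq> [] \<longrightarrow> \<not> (y \<in> A \<and> hd w' \<in> A) \<and> \<not> (y \<in> B \<and> hd w' \<in> B)"
    using rw Cons by (auto simp: reduced_word_Cons)
  have yc: "y \<in> carrier G" using letter_closed[OF yl] .
  have w'c: "word_prod G w' \<in> carrier G" using word_prod_closed reduced_word_closed rw' by blast
  show ?thesis
  proof (cases "s \<in> A \<longleftrightarrow> y \<in> A")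
    case same: True
    show ?thesis
    proof (cases "s \<otimes> y = \<one>")
      case True
      have "s \<otimes> word_prod G w = word_prod G w'"
        using Cons True sc yc w'c by (simp add: m_assoc[symmetric])
      then show ?thesis using Cons True same normal_form_word_prod[OF rw'] by simp
    next
      case False
      note sy = letter_mult_same_factor[OF s yl same False]
      have "reduced_word G A B ((s \<otimes> y) # w')"
        unfolding reduced_word_Cons
        using sy rw' ends same letter_in_A_iff[OF s] letter_in_A_iff[OF yl] by blast
      moreover have "word_prod G ((s \<otimes> y) # w') = s \<otimes> word_prod G w"
        using Cons sc yc w'c by (simp add: m_assoc)
      ultimately show ?thesis using Cons same False normal_form_eq by auto
    qed
  next
    case False
    have "reduced_word G A B (s # w)"
      unfolding reduced_word_Cons using s rw Cons False different_factors_iff[OF s yl] by auto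
    then show ?thesis using normal_form_word_prod[of "s # w"] Cons False by simp
  qed
qed

definition projA :: "'a \<Rightarrow> 'a" where
  "projA g = word_prod G (filter (\<lambda>x. x \<in> A) (normal_form G A B g))"

lemma word_prod_filter_A: "word_prod G (filter (\<lambda>x. x \<in> A) w) \<in> A"
  by (rule word_prod_in_subgroup[OF subgroup_A]) auto

lemma projA_in_A: "projA g \<in> A"
  unfolding projA_def by (rule word_prod_filter_A)

lemma projA_closed: "projA g \<in> carrier G"
  using projA_in_A A_subset by blast

lemma projA_letter_mult:
  assumes s: "s \<in> letters" and g: "g \<in> carrier G"
  shows "projA (s \<otimes> g) = (if s \<in> A then s else \<one>) \<otimes> projA g"
proof -
  define w where "w = normal_form G A B g"
  let ?P = "\<lambda>v. word_prod G (filter (\<lambda>x. x \<in> A) v)"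
  have rw: "reduced_word G A B w" and gw: "g = word_prod G w"
    using normal_form_spec[OF g] w_def by auto
  have Pc: "?P v \<in> carrier G" for v using word_prod_filter_A A_subset by blast
  have sc: "s \<in> carrier G" using letter_closed[OF s] .
  have nf: "normal_form G A B (s \<otimes> g) =
    (if w = [] then [s] else if (s \<in> A \<longleftrightarrow> hd w \<in> A) then
       (if s \<otimes> hd w = \<one> then tl w else (s \<otimes> hd w) # tl w) else s # w)"
    using normal_form_letter_mult[OF s rw] gw by simp
  have pg: "projA g = ?P w" unfolding projA_def w_def ..
  show ?thesis
  proof (cases w)
    case Nil
    then show ?thesis using nf pg sc by (simp add: projA_def)
  next
    case (Cons y w')
    have yc: "y \<in> carrier G" using letter_closed reduced_word_hd_letter[OF rw] Cons by fastforce
    consider (diff) "\<not> (s \<in> A \<longleftrightarrow> y \<in> A)" | (cancel) "s \<in> A \<longleftrightarrow> y \<in> A" "s \<otimes> y = \<one>"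
      | (merge) "s \<in> A \<longleftrightarrow> y \<in> A" "s \<otimes> y \<noteq> \<one>"
      by blast
    then show ?thesis
    proof cases
      case diff
      then show ?thesis using nf pg Cons sc yc Pc by (simp add: projA_def)
    next
      case cancel
      then have "projA (s \<otimes> g) = ?P w'" using nf Cons by (simp add: projA_def)
      moreover have "s \<otimes> (y \<otimes> ?P w') = ?P w'" if "s \<in> A"
        using cancel sc yc Pc by (simp add: m_assoc[symmetric])
      ultimately show ?thesis using pg Cons cancel Pc by auto
    next
      case merge
      have "s \<otimes> y \<in> A \<longleftrightarrow> s \<in> A"
        using letter_mult_same_factor[OF s _ merge] reduced_word_hd_letter[OF rw] Cons by auto
      then show ?thesis using nf pg Cons merge sc yc Pc by (simp add: projA_def m_assoc)
    qed
  qed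
qed

lemma projA_one: "projA \<one> = \<one>"
  by (simp add: projA_def normal_form_one)

lemma projA_mult:
  assumes x: "x \<in> carrier G" and y: "y \<in> carrier G"
  shows "projA (x \<otimes> y) = projA x \<otimes> projA y"
  using x
proof (induction x rule: letter_induct)
  case (step s x)
  have sc: "s \<in> carrier G" using letter_closed[OF step.hyps(1)] .
  have "projA (s \<otimes> x \<otimes> y) = (if s \<in> A then s else \<one>) \<otimes> (projA x \<otimes> projA y)"
    using step y sc by (simp add: m_assoc projA_letter_mult)
  also have "\<dots> = projA (s \<otimes> x) \<otimes> projA y"
    using step sc by (simp add: projA_letter_mult projA_closed m_assoc)
  finally show ?case .
qed (use y projA_closed projA_one in simp)

lemma projA_A:
  assumes "a \<in> A"
  shows "projA a = a"
proof (cases "a = \<one>")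
  case False
  then have "normal_form G A B a = [a]" using assms normal_form_letter by blast
  then show ?thesis using assms A_subset by (auto simp: projA_def)
qed (simp add: projA_one)

lemma projA_B:
  assumes "b \<in> B"
  shows "projA b = \<one>"
proof (cases "b = \<one>")
  case False
  then have "normal_form G A B b = [b]" "b \<notin> A" using assms normal_form_letter A_Int_B by blast+
  then show ?thesis by (simp add: projA_def)
qed (simp add: projA_one)

lemma projA_inv:
  assumes x: "x \<in> carrier G"
  shows "projA (inv x) = inv (projA x)"
proof -
  have "projA (inv x) \<otimes> projA x = \<one>" using projA_mult[OF inv_closed[OF x] x] x projA_one by simp
  then show ?thesis using projA_closed inv_equality by metis
qed

lemma projA_conjugate:
  "k \<in> carrier G \<Longrightarrow> x \<in> carrier G \<Longrightarrow> projA (conjugate G k x) = conjugate G (projA k) (projA x)"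
  unfolding conjugate_def using projA_mult projA_inv by simp

lemma projA_conjugate_B:
  assumes "g \<in> carrier G" "b \<in> B"
  shows "projA (conjugate G g b) = \<one>"
  using projA_conjugate[OF assms(1)] assms B_subset projA_B projA_closed by auto

section \<open>Finite subgroups are conjugate into a factor\<close>

lemma cyclically_reduced_infinite_order:
  assumes rw: "reduced_word G A B w" and ne: "w \<noteq> []"
    and ends: "\<not> (last w \<in> A \<and> hd w \<in> A) \<and> \<not> (last w \<in> B \<and> hd w \<in> B)"
  shows "ord (word_prod G w) = 0"
proof (rule ccontr)
  have wc: "word_prod G w \<in> carrier G" using word_prod_closed[OF reduced_word_closed[OF rw]] .
  assume "ord (word_prod G w) \<noteq> 0"
  then have "\<exists>n::nat. n \<noteq> 0 \<and> word_prod G w [^] n = \<one>" using ord_eq_0[OF wc] by simp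
  then obtain n :: nat where n: "n \<noteq> 0" "word_prod G w [^] n = \<one>" by blast
  have r: "reduced_word G A B (concat (replicate n w))" using reduced_word_replicate[OF rw ne ends] .
  have "word_prod G (concat (replicate n w)) = \<one>"
    using word_prod_replicate[OF reduced_word_closed[OF rw]] n(2) by (rule trans)
  then have "concat (replicate n w) = []" using normal_form_word_prod[OF r] normal_form_one by simp
  then show False using n(1) ne by simp
qed

text \<open>Otherwise the normal form, or its conjugate by the first letter, is cyclically reduced.\<close>

lemma finite_order_normal_form:
  assumes g: "g \<in> carrier G" and fo: "ord g \<noteq> 0" and len: "length (normal_form G A B g) \<ge> 2"
  obtains s m where "m \<noteq> []" "normal_form G A B g = s # m @ [inv s]"
proof -
  obtain s m t where wd: "normal_form G A B g = s # m @ [t]"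
  proof (cases "normal_form G A B g")
    case (Cons s v)
    then have "v \<noteq> []" using len by auto
    then show thesis using that[of s "butlast v" "last v"] Cons by simp
  qed (use len in simp)
  have rw: "reduced_word G A B (s # m @ [t])" using normal_form_reduced[OF g] wd by simp
  note S = reduced_word_Cons_snoc[OF rw]
  have sc: "s \<in> carrier G" and tc: "t \<in> carrier G" using letter_closed S(1,2) by auto
  have mc: "set m \<subseteq> carrier G" using reduced_word_closed[OF S(3)] .
  have g_eq: "g = s \<otimes> (word_prod G m \<otimes> t)"
    using word_prod_normal_form[OF g] wd word_prod_append[OF mc, of "[t]"] tc by simp
  have ts: "t \<in> A \<longleftrightarrow> s \<in> A"
    using cyclically_reduced_infinite_order[OF rw] fo word_prod_normal_form[OF g] wd
      different_factors_iff[OF S(2,1)] by auto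
  then have mne: "m \<noteq> []" using S(6) letter_in_A_iff[OF S(1)] letter_in_A_iff[OF S(2)] by blast
  have "t \<otimes> s = \<one>"
  proof (rule ccontr)
    assume ne: "t \<otimes> s \<noteq> \<one>"
    note M = letter_mult_same_factor[OF S(2) S(1) ts ne]
    have rw': "reduced_word G A B (m @ [t \<otimes> s])"
      unfolding reduced_word_append reduced_word_singleton using S(3) S(5)[OF mne] M by auto
    have ends': "\<not> (last (m @ [t \<otimes> s]) \<in> A \<and> hd (m @ [t \<otimes> s]) \<in> A) \<and>
        \<not> (last (m @ [t \<otimes> s]) \<in> B \<and> hd (m @ [t \<otimes> s]) \<in> B)"
      using S(4)[OF mne] mne M ts letter_in_A_iff[OF S(1)] letter_in_A_iff[OF S(2)] by auto
    have "conjugate G (inv s) g = word_prod G (m @ [t \<otimes> s])"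
      using g_eq sc tc mc word_prod_closed[OF mc] word_prod_append[OF mc, of "[t \<otimes> s]"]
      by (simp add: conjugate_def m_assoc)
    moreover have "ord (conjugate G (inv s) g) \<noteq> 0" using ord_conjugate_ne_0[OF _ g fo] sc by simp
    ultimately show False using cyclically_reduced_infinite_order[OF rw' _ ends'] by simp
  qed
  then have "t = inv s" using inv_equality sc tc by simp
  then show thesis using that mne wd by blast
qed

definition syllable_length :: "'a \<Rightarrow> nat" where
  "syllable_length x = length (normal_form G A B x)"

lemma syllable_length_le_1:
  assumes x: "x \<in> carrier G" and l: "syllable_length x \<le> 1"
  shows "x \<in> A \<union> B"
proof (cases "normal_form G A B x")
  case Nil
  then have "x = \<one>" using word_prod_normal_form[OF x] by simp
  then show ?thesis using subgroup.one_closed[OF subgroup_A] by simp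
next
  case (Cons y w)
  then have "normal_form G A B x = [y]" using l by (simp add: syllable_length_def)
  moreover have "reduced_word G A B [y]" using normal_form_reduced[OF x] calculation by simp
  ultimately show ?thesis using word_prod_normal_form[OF x] letter_closed
    by (auto simp: reduced_word_singleton)
qed

lemma syllable_length_factor: "x \<in> A \<union> B \<Longrightarrow> syllable_length x \<le> 1"
  by (cases "x = \<one>") (simp_all add: syllable_length_def normal_form_one normal_form_letter)

lemma syllable_length_eq_1:
  assumes x: "x \<in> carrier G" and l: "syllable_length x = 1"
  shows "x \<in> letters"
proof -
  obtain y where y: "normal_form G A B x = [y]" using l unfolding syllable_length_def
    by (cases "normal_form G A B x") auto
  then have "y \<in> letters" using normal_form_reduced[OF x] by (simp add: reduced_word_singleton)
  then show ?thesis using word_prod_normal_form[OF x] y letter_closed by auto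
qed

lemma syllable_length_conjugate_first_letter:
  assumes h: "h \<in> carrier G" and n: "normal_form G A B h = s # m @ [inv s]"
  shows "syllable_length (conjugate G (inv s) h) < syllable_length h"
proof -
  have r: "reduced_word G A B (s # m @ [inv s])" using normal_form_reduced[OF h] n by simp
  have sc: "s \<in> carrier G" using letter_closed reduced_word_Cons_snoc(1)[OF r] by blast
  have rm: "reduced_word G A B m" using reduced_word_Cons_snoc(3)[OF r] .
  have mc: "set m \<subseteq> carrier G" using reduced_word_closed[OF rm] .
  have "h = s \<otimes> (word_prod G m \<otimes> inv s)"
    using word_prod_normal_form[OF h] n word_prod_append[OF mc, of "[inv s]"] sc by simp
  then have "conjugate G (inv s) h = word_prod G m"
    using sc word_prod_closed[OF mc] by (simp add: conjugate_def m_assoc)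
  then show ?thesis using normal_form_word_prod[OF rm] n by (simp add: syllable_length_def)
qed

lemma syllable_length_conjugate_first_letter_le:
  assumes h: "h \<in> carrier G" and sl: "s \<in> letters"
    and long: "syllable_length h \<ge> 2 \<Longrightarrow> \<exists>m. normal_form G A B h = s # m @ [inv s]"
    and short: "syllable_length h = 1 \<Longrightarrow> h \<in> A \<longleftrightarrow> s \<in> A"
  shows "syllable_length (conjugate G (inv s) h) \<le> syllable_length h"
proof -
  have isc: "inv s \<in> carrier G" using letter_closed[OF sl] by simp
  consider "syllable_length h = 0" | "syllable_length h = 1" | "syllable_length h \<ge> 2" by linarith
  then show ?thesis
  proof cases
    case 1
    then have "h = \<one>" using word_prod_normal_form[OF h] by (simp add: syllable_length_def)
    then show ?thesis using isc by (simp add: syllable_length_def normal_form_one)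
  next
    case 2
    have hl: "h \<in> letters" using syllable_length_eq_1[OF h 2] .
    have "conjugate G (inv s) h \<in> A \<union> B"
    proof (cases "s \<in> A")
      case True
      then have "inv s \<in> A" "h \<in> A" using short[OF 2] subgroup.m_inv_closed[OF subgroup_A] by auto
      then show ?thesis using conjugate_in_subgroup[OF subgroup_A] by blast
    next
      case False
      then have "inv s \<in> B" "h \<in> B"
        using sl hl short[OF 2] subgroup.m_inv_closed[OF subgroup_B] by auto
      then show ?thesis using conjugate_in_subgroup[OF subgroup_B] by blast
    qed
    then show ?thesis using syllable_length_factor 2 by fastforce
  next
    case 3
    then show ?thesis
      using long syllable_length_conjugate_first_letter[OF h] by (auto intro: less_imp_le)
  qed
qed

text \<open>If \<open>t \<noteq> s\<close>, the normal form of \<open>h\<^sub>0\<inverse> h\<^sub>1\<close> is either cyclically reduced or starts with \<open>s\<close>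
  and ends with \<open>t\<inverse>\<close>; both contradict finite order.\<close>

lemma finite_order_same_first_letter:
  assumes h0: "h0 \<in> carrier G" and h1: "h1 \<in> carrier G" and fo: "ord (inv h0 \<otimes> h1) \<noteq> 0"
    and n0: "normal_form G A B h0 = s # m0 @ [inv s]" and n1: "normal_form G A B h1 = t # m1 @ [inv t]"
    and m0: "m0 \<noteq> []" and m1: "m1 \<noteq> []"
  shows "t = s"
proof (rule ccontr)
  assume ts: "t \<noteq> s"
  define u where "u = s # inv_word G m0 @ [inv s]"
  define v where "v = t # m1 @ [inv t]"
  have ru: "reduced_word G A B u" and wu: "word_prod G u = inv h0"
    using normal_form_spec[OF inv_closed[OF h0]] normal_form_inv[OF h0] n0
      letter_closed reduced_word_Cons_snoc(1)[of G A B s m0 "inv s"] normal_form_reduced[OF h0]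
    by (auto simp: u_def inv_word_def)
  have rv: "reduced_word G A B v" and wv: "word_prod G v = h1"
    using normal_form_spec[OF h1] n1 by (simp_all add: v_def)
  have sl: "s \<in> letters" and tl: "t \<in> letters"
    using reduced_word_hd_letter[OF ru] reduced_word_hd_letter[OF rv] by (simp_all add: u_def v_def)
  have sc: "s \<in> carrier G" and tc: "t \<in> carrier G" using letter_closed sl tl by auto
  note isl = inv_letter[OF sl] and itl = inv_letter[OF tl]
  have uc: "set u \<subseteq> carrier G" and vc: "set v \<subseteq> carrier G"
    using reduced_word_closed ru rv by auto
  show False
  proof (cases "s \<in> A \<longleftrightarrow> t \<in> A")
    case False
    have "reduced_word G A B (u @ v)"
      unfolding reduced_word_append using ru rv different_factors_iff[OF isl(1) tl] isl(2) False
      by (simp add: u_def v_def)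
    moreover have "\<not> (last (u @ v) \<in> A \<and> hd (u @ v) \<in> A) \<and> \<not> (last (u @ v) \<in> B \<and> hd (u @ v) \<in> B)"
      using different_factors_iff[OF itl(1) sl] itl(2) False by (simp add: u_def v_def)
    ultimately have "ord (word_prod G (u @ v)) = 0"
      using cyclically_reduced_infinite_order[of "u @ v"] by (simp add: u_def)
    then show False using fo word_prod_append[OF uc vc] wu wv by simp
  next
    case same: True
    define c where "c = inv s \<otimes> t"
    have "c \<noteq> \<one>" using ts sc tc mult_inv_cancel_left[of s t] unfolding c_def by force
    then have cl: "c \<in> letters" and cA: "c \<in> A \<longleftrightarrow> s \<in> A"
      using letter_mult_same_factor[OF isl(1) tl] same isl(2) unfolding c_def by auto
    define L where "L = s # inv_word G m0"
    define R where "R = m1 @ [inv t]"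
    have uL: "u = L @ [inv s]" and vR: "v = t # R" by (simp_all add: u_def L_def v_def R_def)
    have rL: "reduced_word G A B L"
      and endL: "\<not> (last L \<in> A \<and> inv s \<in> A) \<and> \<not> (last L \<in> B \<and> inv s \<in> B)"
      using ru unfolding uL reduced_word_append by (auto simp: L_def)
    have rR: "reduced_word G A B R" and endR: "\<not> (t \<in> A \<and> hd R \<in> A) \<and> \<not> (t \<in> B \<and> hd R \<in> B)"
      using rv unfolding vR reduced_word_Cons by (auto simp: R_def)
    have Rl: "hd R \<in> letters" and Ll: "last L \<in> letters"
      using reduced_word_hd_letter[OF rR] reduced_word_last_letter[OF rL] by (simp_all add: R_def L_def)
    have rW: "reduced_word G A B (L @ c # R)"
      unfolding reduced_word_append reduced_word_Cons
      using rL rR cl endL endR cA same isl(2) different_factors_iff[OF Ll cl]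
        different_factors_iff[OF Ll isl(1)] different_factors_iff[OF cl Rl]
        different_factors_iff[OF tl Rl]
      by (auto simp: L_def R_def)
    have Lc: "set L \<subseteq> carrier G" and Rc: "set R \<subseteq> carrier G"
      using reduced_word_closed rL rR by auto
    have "word_prod G (L @ c # R) = (word_prod G L \<otimes> inv s) \<otimes> (t \<otimes> word_prod G R)"
      using word_prod_append[OF Lc] Rc sc tc word_prod_closed[OF Lc] word_prod_closed[OF Rc]
      by (simp add: c_def m_assoc)
    also have "\<dots> = inv h0 \<otimes> h1"
      using wu wv word_prod_append[OF Lc, of "[inv s]"] sc by (simp add: uL vR)
    finally have nW: "normal_form G A B (inv h0 \<otimes> h1) = L @ c # R"
      using normal_form_word_prod[OF rW] by simp
    obtain s' m where "normal_form G A B (inv h0 \<otimes> h1) = s' # m @ [inv s']"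
      using finite_order_normal_form[of "inv h0 \<otimes> h1"] h0 h1 fo nW by (auto simp: L_def)
    then have "inv t = inv s" using nW by (cases "m1 = []") (auto simp: L_def R_def)
    then show False using ts sc tc inv_inj by (metis inv_inv)
  qed
qed

lemma finite_order_letter_mult:
  assumes h0: "h0 \<in> carrier G" and y: "y \<in> letters"
    and n0: "normal_form G A B h0 = s # m0 @ [inv s]" and ys: "\<not> (y \<in> A \<longleftrightarrow> s \<in> A)"
  shows "ord (y \<otimes> h0) = 0"
proof -
  have r0: "reduced_word G A B (s # m0 @ [inv s])" using normal_form_reduced[OF h0] n0 by simp
  have sl: "s \<in> letters" using reduced_word_Cons_snoc(1)[OF r0] .
  note isl = inv_letter[OF sl]
  have "reduced_word G A B (y # s # m0 @ [inv s])"
    unfolding reduced_word_Cons[of _ _ _ y] using y r0 different_factors_iff[OF y sl] ys by simp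
  moreover have "\<not> (last (y # s # m0 @ [inv s]) \<in> A \<and> hd (y # s # m0 @ [inv s]) \<in> A) \<and>
      \<not> (last (y # s # m0 @ [inv s]) \<in> B \<and> hd (y # s # m0 @ [inv s]) \<in> B)"
    using different_factors_iff[OF isl(1) y] isl(2) ys by simp
  ultimately have "ord (word_prod G (y # s # m0 @ [inv s])) = 0"
    using cyclically_reduced_infinite_order by blast
  then show ?thesis using word_prod_normal_form[OF h0] n0 by simp
qed

lemma subgroup_in_factor_if_short:
  assumes H: "subgroup H G" and short: "\<forall>h\<in>H. syllable_length h \<le> 1"
  shows "H \<subseteq> A \<or> H \<subseteq> B"
proof (rule ccontr)
  have AB: "h \<in> A \<union> B" if "h \<in> H" for h
    using that short syllable_length_le_1 subgroup.mem_carrier[OF H] by blast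
  assume "\<not> (H \<subseteq> A \<or> H \<subseteq> B)"
  then obtain a b where a: "a \<in> H" "a \<notin> B" and b: "b \<in> H" "b \<notin> A" by blast
  have one: "\<one> \<in> A" "\<one> \<in> B" using subgroup.one_closed subgroup_A subgroup_B by blast+
  have al: "a \<in> letters" "a \<in> A" and bl: "b \<in> letters" using AB a b one by auto
  have "normal_form G A B (a \<otimes> word_prod G [b]) = [a, b]"
    using normal_form_letter_mult[OF al(1), of "[b]"] bl b(2) al(2) by (simp add: reduced_word_singleton)
  then have "syllable_length (a \<otimes> b) = 2"
    using letter_closed[OF bl] by (simp add: syllable_length_def)
  then show False using short subgroup.m_closed[OF H a(1) b(1)] by fastforce
qed

text \<open>Every element of length at least two also has the form \<open>s m' s\<inverse>\<close>, and every element of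
  length one lies in the factor of \<open>s\<close>; so no length increases, and that of \<open>h\<^sub>0\<close> drops.\<close>

lemma finite_subgroup_conjugate_shortens:
  assumes H: "subgroup H G" and fin: "finite H" and h0: "h0 \<in> H"
    and n0: "normal_form G A B h0 = s # m0 @ [inv s]" and m0: "m0 \<noteq> []"
  shows "(\<Sum>h\<in>conjugate G (inv s) ` H. syllable_length h) < (\<Sum>h\<in>H. syllable_length h)"
proof -
  have hc: "h \<in> carrier G" if "h \<in> H" for h using subgroup.mem_carrier[OF H that] .
  have fo: "ord h \<noteq> 0" if "h \<in> H" for h using ord_ne_0_in_finite_subgroup[OF H fin that] .
  have sl: "s \<in> letters"
    using reduced_word_hd_letter normal_form_reduced[OF hc[OF h0]] n0 by fastforce
  have isc: "inv s \<in> carrier G" using letter_closed[OF sl] by simp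
  have long: "\<exists>m. normal_form G A B h = s # m @ [inv s]"
    if h: "h \<in> H" "syllable_length h \<ge> 2" for h
  proof -
    obtain t m where n: "normal_form G A B h = t # m @ [inv t]" and m: "m \<noteq> []"
      using finite_order_normal_form[OF hc[OF h(1)] fo[OF h(1)]] h(2)
      unfolding syllable_length_def by blast
    have "inv h0 \<otimes> h \<in> H" using subgroup.m_closed[OF H subgroup.m_inv_closed[OF H h0] h(1)] .
    then have "t = s"
      using finite_order_same_first_letter[OF hc[OF h0] hc[OF h(1)] _ n0 n m0 m] fo by blast
    then show ?thesis using n by blast
  qed
  have short: "h \<in> A \<longleftrightarrow> s \<in> A" if h: "h \<in> H" "syllable_length h = 1" for h
  proof (rule ccontr)
    assume "\<not> (h \<in> A \<longleftrightarrow> s \<in> A)"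
    then have "ord (h \<otimes> h0) = 0"
      using finite_order_letter_mult[OF hc[OF h0] syllable_length_eq_1[OF hc[OF h(1)] h(2)] n0] by simp
    then show False using fo subgroup.m_closed[OF H h(1) h0] by simp
  qed
  have le: "syllable_length (conjugate G (inv s) h) \<le> syllable_length h" if h: "h \<in> H" for h
    using syllable_length_conjugate_first_letter_le[OF hc[OF h] sl] long[OF h] short[OF h] by blast
  have "inj_on (conjugate G (inv s)) H"
    using inj_on_subset[OF inj_on_conjugate[OF isc]] hc by blast
  then have "(\<Sum>h\<in>conjugate G (inv s) ` H. syllable_length h) = (\<Sum>h\<in>H. syllable_length (conjugate G (inv s) h))"
    by (simp add: sum.reindex)
  also have "\<dots> < (\<Sum>h\<in>H. syllable_length h)"
    by (rule sum_strict_mono_ex1[OF fin])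
      (use le h0 syllable_length_conjugate_first_letter[OF hc[OF h0] n0] in auto)
  finally show ?thesis .
qed

theorem finite_subgroup_conjugate_into_factor:
  assumes "subgroup H G" "finite H"
  shows "\<exists>g\<in>carrier G. H \<subseteq> conjugate G g ` A \<or> H \<subseteq> conjugate G g ` B"
  using assms
proof (induction "\<Sum>h\<in>H. syllable_length h" arbitrary: H rule: less_induct)
  case less
  show ?case
  proof (cases "\<forall>h\<in>H. syllable_length h \<le> 1")
    case True
    then show ?thesis
      using subgroup_in_factor_if_short[OF less.prems(1)] conjugate_by_one_image A_subset B_subset
      by (metis one_closed)
  next
    case False
    then obtain h0 where h0: "h0 \<in> H" "syllable_length h0 \<ge> 2" by fastforce
    have h0c: "h0 \<in> carrier G" using subgroup.mem_carrier[OF less.prems(1) h0(1)] .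
    obtain s m0 where m0: "m0 \<noteq> []" and n0: "normal_form G A B h0 = s # m0 @ [inv s]"
      using finite_order_normal_form[OF h0c ord_ne_0_in_finite_subgroup[OF less.prems h0(1)]] h0(2)
      unfolding syllable_length_def by blast
    have sc: "s \<in> carrier G"
      using letter_closed reduced_word_hd_letter normal_form_reduced[OF h0c] n0 by fastforce
    let ?H' = "conjugate G (inv s) ` H"
    have Hc: "H \<subseteq> carrier G" using less.prems(1) subgroup.subset by blast
    obtain g where g: "g \<in> carrier G" and cov: "?H' \<subseteq> conjugate G g ` A \<or> ?H' \<subseteq> conjugate G g ` B"
      using less.hyps[OF finite_subgroup_conjugate_shortens[OF less.prems h0(1) n0 m0]]
        subgroup_conjugate_image[OF less.prems(1)] less.prems(2) sc by blast
    have H_eq: "H = conjugate G s ` ?H'" using conjugate_inv_image[of "inv s" H] sc Hc by simp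
    have "H \<subseteq> conjugate G (s \<otimes> g) ` X" if "?H' \<subseteq> conjugate G g ` X" "X \<subseteq> carrier G" for X
      using image_mono[OF that(1), of "conjugate G s"] H_eq
        conjugate_image_conjugate_image[OF sc g that(2)] by simp
    then show ?thesis using cov A_subset B_subset sc g by blast
  qed
qed

section \<open>Splittings with finite factors are unique up to conjugacy\<close>

text \<open>Comparison with a second splitting \<open>G = X * Y\<close>, via the retraction onto \<open>A\<close>: it is the
  identity on \<open>A\<close> and kills every conjugate of \<open>B\<close>.\<close>

lemma splitting_factors_not_both_conjugate_into_B:
  assumes XY: "free_splitting G X Y" and g: "g \<in> carrier G" and h: "h \<in> carrier G"
    and X: "X \<subseteq> conjugate G g ` B" and Y: "Y \<subseteq> conjugate G h ` B"
  shows False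
proof -
  interpret P: free_splitting G X Y by (rule XY)
  have kill: "projA x = \<one>" if x: "x \<in> carrier G" for x
    using x
  proof (induction x rule: P.letter_induct)
    case (step s x)
    have "projA s = \<one>"
    proof (cases "s \<in> X")
      case True
      then obtain b where "b \<in> B" "s = conjugate G g b" using X by blast
      then show ?thesis using projA_conjugate_B[OF g] by simp
    next
      case False
      then obtain b where "b \<in> B" "s = conjugate G h b" using step.hyps(1) Y by blast
      then show ?thesis using projA_conjugate_B[OF h] by simp
    qed
    then show ?case using projA_mult[OF P.letter_closed[OF step.hyps(1)] step.hyps(2)] step.IH by simp
  qed (rule projA_one)
  obtain a where "a \<in> A" "a \<noteq> \<one>" using A_nontrivial subgroup.one_closed[OF subgroup_A] by blast
  then show False using kill[of a] projA_A[of a] A_subset by auto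
qed

lemma splitting_factor_conjugate_into_A_eq:
  assumes XY: "free_splitting G X Y" and finX: "finite X" and g: "g \<in> carrier G" and h: "h \<in> carrier G"
    and X: "X \<subseteq> conjugate G g ` A" and Y: "Y \<subseteq> conjugate G h ` B"
  shows "X = conjugate G g ` A"
proof -
  interpret P: free_splitting G X Y by (rule XY)
  have onto: "projA x \<in> projA ` X" if x: "x \<in> carrier G" for x
    using x
  proof (induction x rule: P.letter_induct)
    case one
    then show ?case using subgroup.one_closed[OF P.subgroup_A] by blast
  next
    case (step s x)
    have sc: "s \<in> carrier G" using P.letter_closed[OF step.hyps(1)] .
    obtain x' where x': "x' \<in> X" "projA x = projA x'" using step.IH by blast
    show ?case
    proof (cases "s \<in> X")
      case True
      have "projA (s \<otimes> x) = projA (s \<otimes> x')"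
        using projA_mult[OF sc step.hyps(2)] projA_mult[OF sc] x' P.A_subset by auto
      then show ?thesis using subgroup.m_closed[OF P.subgroup_A True x'(1)] by blast
    next
      case False
      then obtain b where "b \<in> B" "s = conjugate G h b" using step.hyps(1) Y by blast
      then have "projA s = \<one>" using projA_conjugate_B[OF h] by simp
      then show ?thesis using projA_mult[OF sc step.hyps(2)] projA_closed step.IH by simp
    qed
  qed
  have AX: "A \<subseteq> projA ` X"
  proof
    fix a assume "a \<in> A"
    then show "a \<in> projA ` X" using onto[of a] projA_A A_subset by force
  qed
  have finA: "finite A" using finite_subset[OF AX] finX by blast
  have "card A \<le> card X"
    using card_mono[OF finite_imageI[OF finX] AX] card_image_le[OF finX, of projA] by simp
  moreover have "card (conjugate G g ` A) \<le> card A" using card_image_le[OF finA] .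
  moreover have "card X \<le> card (conjugate G g ` A)" using card_mono[OF finite_imageI[OF finA] X] .
  ultimately show ?thesis using card_subset_eq[OF finite_imageI[OF finA] X] by simp
qed

lemma free_splitting_conjugate:
  assumes k: "k \<in> carrier G"
  shows "free_splitting G (conjugate G k ` A) (conjugate G k ` B)"
proof -
  let ?c = "conjugate G k" and ?c' = "conjugate G (inv k)"
  have ik: "inv k \<in> carrier G" using k by simp
  have inv_images: "?c' ` ?c ` A = A" "?c' ` ?c ` B = B"
    using conjugate_inv_image[OF k] A_subset B_subset by auto
  have one: "\<one> \<in> A" "\<one> \<in> B" using subgroup.one_closed subgroup_A subgroup_B by blast+
  have "?c ` A \<inter> ?c ` B = ?c ` (A \<inter> B)"
    using inj_on_image_Int[OF inj_on_conjugate[OF k] A_subset B_subset] by simp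
  then have int: "?c ` A \<inter> ?c ` B = {\<one>}" using A_Int_B k by simp
  have nontrivial: "?c ` X \<noteq> {\<one>}" if X: "X \<noteq> {\<one>}" "\<one> \<in> X" "X \<subseteq> carrier G" for X
  proof
    obtain x where x: "x \<in> X" "x \<noteq> \<one>" using X by blast
    assume "?c ` X = {\<one>}"
    then have "?c x = \<one>" using x by blast
    then show False using conjugate_eq_one_iff[OF k] x X(3) by auto
  qed
  have "\<exists>!w. reduced_word G (?c ` A) (?c ` B) w \<and> word_prod G w = g" if g: "g \<in> carrier G" for g
  proof
    let ?w = "map ?c (normal_form G A B (?c' g))"
    have "?c' g \<in> carrier G" using g ik by simp
    then show "reduced_word G (?c ` A) (?c ` B) ?w \<and> word_prod G ?w = g"
      using reduced_word_map_conjugate[OF normal_form_reduced k A_subset B_subset]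
        word_prod_map_conjugate[OF k normal_form_closed] word_prod_normal_form g k by simp
  next
    fix w assume w: "reduced_word G (?c ` A) (?c ` B) w \<and> word_prod G w = g"
    have cAB: "?c ` A \<union> ?c ` B \<subseteq> carrier G" using k A_subset B_subset by auto
    then have wc: "set w \<subseteq> carrier G" using w unfolding reduced_word_def by blast
    have "reduced_word G A B (map ?c' w)"
      using reduced_word_map_conjugate[of "?c ` A" "?c ` B" w "inv k"] w ik cAB inv_images
      by simp
    moreover have "word_prod G (map ?c' w) = ?c' g" using word_prod_map_conjugate[OF ik wc] w by simp
    ultimately have "map ?c' w = normal_form G A B (?c' g)" using normal_form_eq by simp
    moreover have "map ?c (map ?c' w) = w" using wc k by (induction w) auto
    ultimately show "w = map ?c (normal_form G A B (?c' g))" by metis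
  qed
  then show ?thesis
    using subgroup_conjugate_image[OF subgroup_A k] subgroup_conjugate_image[OF subgroup_B k] int
      nontrivial[OF A_nontrivial one(1) A_subset] nontrivial[OF B_nontrivial one(2) B_subset]
    by (simp add: free_splitting_def free_splitting_axioms_def is_splitting_def is_group)
qed

lemma double_coset_decomposition:
  assumes e: "e \<in> carrier G"
  obtains a m b where "a \<in> A" "b \<in> B" "reduced_word G A B m" "e = a \<otimes> (word_prod G m \<otimes> b)"
    "m \<noteq> [] \<Longrightarrow> hd m \<in> B \<and> last m \<in> A"
proof -
  define w where "w = normal_form G A B e"
  define hdA where "hdA = (w \<noteq> [] \<and> hd w \<in> A)"
  define w1 where "w1 = (if hdA then tl w else w)"
  define lastB where "lastB = (w1 \<noteq> [] \<and> last w1 \<in> B)"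
  define m where "m = (if lastB then butlast w1 else w1)"
  define a where "a = (if hdA then hd w else \<one>)"
  define b where "b = (if lastB then last w1 else \<one>)"
  have rw: "reduced_word G A B w" using normal_form_reduced[OF e] by (simp add: w_def)
  have w_eq: "w = (if hdA then [a] else []) @ w1"
    unfolding w1_def a_def hdA_def by (cases w) auto
  have w1_eq: "w1 = m @ (if lastB then [b] else [])"
    unfolding m_def b_def lastB_def by auto
  have rw1: "reduced_word G A B w1" using rw unfolding w_eq reduced_word_append by blast
  have rm: "reduced_word G A B m" using rw1 unfolding w1_eq reduced_word_append by blast
  have ab: "a \<in> A" "b \<in> B"
    using subgroup.one_closed[OF subgroup_A] subgroup.one_closed[OF subgroup_B]
    unfolding a_def b_def hdA_def lastB_def by auto
  have ac: "a \<in> carrier G" and bc: "b \<in> carrier G" using ab A_subset B_subset by auto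
  have mc: "set m \<subseteq> carrier G" using reduced_word_closed[OF rm] .
  have "e = word_prod G w" using word_prod_normal_form[OF e] by (simp add: w_def)
  also have "\<dots> = a \<otimes> (word_prod G m \<otimes> b)"
    using ac bc mc word_prod_append[OF mc, of "[b]"] word_prod_closed[OF mc]
    unfolding w_eq w1_eq by (cases lastB; cases hdA) (simp_all add: a_def b_def)
  finally have e_eq: "e = a \<otimes> (word_prod G m \<otimes> b)" .
  have "hd m \<in> B \<and> last m \<in> A" if mne: "m \<noteq> []"
  proof -
    have w1: "w1 \<noteq> []" "hd w1 = hd m" using mne unfolding w1_eq by auto
    have "hd m \<notin> A"
    proof (cases hdA)
      case True
      then have "reduced_word G A B (a # w1)" "a \<in> A" using rw w_eq ab by simp_all
      then show ?thesis using w1 by (simp add: reduced_word_Cons)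
    next
      case False
      then have "w1 = w" "w = [] \<or> hd w \<notin> A" unfolding w1_def hdA_def by auto
      then show ?thesis using w1 by auto
    qed
    moreover have "last m \<notin> B"
    proof (cases lastB)
      case True
      then show ?thesis using rw1 w1_eq mne ab by (simp add: reduced_word_append)
    next
      case False
      then have "m = w1" "w1 = [] \<or> last w1 \<notin> B" unfolding m_def lastB_def by auto
      then show ?thesis using mne by auto
    qed
    ultimately show ?thesis
      using reduced_word_hd_letter[OF rm mne] reduced_word_last_letter[OF rm mne] by blast
  qed
  then show thesis using that ab rm e_eq by blast
qed

lemma inv_word_from_A_to_B:
  assumes rm: "reduced_word G A B m" and mne: "m \<noteq> []" and hm: "hd m \<in> B" and lm: "last m \<in> A"
  shows "reduced_word G A B (inv_word G m)" "inv_word G m \<noteq> []"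
    "hd (inv_word G m) \<in> A - B" "last (inv_word G m) \<in> B - A"
proof -
  show rmi: "reduced_word G A B (inv_word G m)" using reduced_word_inv_word[OF rm] .
  show mine: "inv_word G m \<noteq> []" using mne by (simp add: inv_word_def)
  have hml: "hd m \<in> letters" and lml: "last m \<in> letters"
    using reduced_word_hd_letter[OF rm mne] reduced_word_last_letter[OF rm mne] by auto
  show "hd (inv_word G m) \<in> A - B"
    using hd_inv_word[where G=G, OF mne] inv_letter[OF lml] letter_in_A_iff[OF inv_letter(1)[OF lml]] lm by auto
  show "last (inv_word G m) \<in> B - A"
    using last_inv_word[where G=G, OF mne] inv_letter[OF hml] letter_in_A_iff[OF inv_letter(1)[OF hml]] letter_in_A_iff[OF hml] hm by auto
qed

lemma conjugate_letter_by_word: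
  assumes rm: "reduced_word G A B m" and mne: "m \<noteq> []" and hm: "hd m \<in> B" and lm: "last m \<in> A"
    and y: "y \<in> B" "y \<noteq> \<one>"
  shows "reduced_word G A B (m @ [y] @ inv_word G m)"
    and "word_prod G (m @ [y] @ inv_word G m) = conjugate G (word_prod G m) y"
proof -
  let ?mi = "inv_word G m"
  note mi = inv_word_from_A_to_B[OF rm mne hm lm]
  have mc: "set m \<subseteq> carrier G" using reduced_word_closed[OF rm] .
  have yl: "y \<in> letters" and yA: "y \<notin> A" and yc: "y \<in> carrier G"
    using y A_Int_B B_subset by auto
  have "last m \<notin> B" using letter_in_A_iff[OF reduced_word_last_letter[OF rm mne]] lm by blast
  then show "reduced_word G A B (m @ [y] @ ?mi)"
    unfolding reduced_word_append reduced_word_singleton using rm mi mne lm yl yA by simp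
  have mic: "set ?mi \<subseteq> carrier G" using mc by (auto simp: inv_word_def)
  have "word_prod G (m @ [y] @ ?mi) = word_prod G m \<otimes> (y \<otimes> word_prod G ?mi)"
    using word_prod_append[OF mc, of "[y] @ ?mi"] mic yc by simp
  then have "word_prod G (m @ [y] @ ?mi) = word_prod G m \<otimes> (y \<otimes> inv (word_prod G m))"
    using word_prod_inv_word[OF mc] by simp
  then show "word_prod G (m @ [y] @ ?mi) = conjugate G (word_prod G m) y"
    using yc word_prod_closed[OF mc] by (simp add: conjugate_def m_assoc)
qed

text \<open>Each letter \<open>m y m\<inverse>\<close> of the conjugated factor contributes its full normal form: the
  letters of \<open>A\<close> in between cannot cancel against \<open>m\<close>, which starts in \<open>B\<close> and ends in \<open>A\<close>.\<close>

lemma normal_form_word_over_conjugate_factor: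
  assumes rm: "reduced_word G A B m" and mne: "m \<noteq> []" and hm: "hd m \<in> B" and lm: "last m \<in> A"
    and "reduced_word G A (conjugate G (word_prod G m) ` B) U" "U \<noteq> []"
    and "hd U \<in> conjugate G (word_prod G m) ` B"
  shows "\<exists>y t. y \<in> B \<and> normal_form G A B (word_prod G U) = m @ [y] @ inv_word G m @ t \<and>
           (t \<noteq> [] \<longrightarrow> hd t \<in> A)"
  using assms(5-)
proof (induction "length U" arbitrary: U rule: less_induct)
  case less
  let ?mi = "inv_word G m" and ?c = "word_prod G m"
  let ?D = "conjugate G ?c ` B"
  have mc: "set m \<subseteq> carrier G" using reduced_word_closed[OF rm] .
  have cc: "?c \<in> carrier G" using word_prod_closed[OF mc] .
  have Dc: "?D \<subseteq> carrier G" using cc B_subset by auto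
  have mine: "?mi \<noteq> []" and lmi: "last ?mi \<notin> A"
    using inv_word_from_A_to_B[OF rm mne hm lm] by auto
  have hmA: "hd m \<notin> A" using hm reduced_word_hd_letter[OF rm mne] A_Int_B by blast
  obtain d U' where U: "U = d # U'" using less.prems(2) by (cases U) auto
  have rU': "reduced_word G A ?D U'"
    and ends: "U' \<noteq> [] \<Longrightarrow> \<not> (d \<in> A \<and> hd U' \<in> A) \<and> \<not> (d \<in> ?D \<and> hd U' \<in> ?D)"
    using less.prems(1) U by (auto simp: reduced_word_Cons)
  obtain y where y: "y \<in> B" "d = conjugate G ?c y" using less.prems(3) U by auto
  have dc: "d \<in> carrier G" using y cc B_subset by auto
  have "y \<noteq> \<one>" using less.prems(1) U y cc by (auto simp: reduced_word_Cons)
  note Cy = conjugate_letter_by_word[OF rm mne hm lm y(1) this]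
  show ?case
  proof (cases U')
    case Nil
    then show ?thesis using U y Cy normal_form_word_prod[OF Cy(1)] cc B_subset by auto
  next
    case (Cons z U'')
    have zA: "z \<in> A" and zl: "z \<in> letters"
      using rU' ends less.prems(3) U Cons by (auto simp: reduced_word_Cons)
    have zc: "z \<in> carrier G" using letter_closed[OF zl] .
    have r2: "reduced_word G A B ((m @ [y] @ ?mi) @ [z])"
      unfolding reduced_word_append[of G A B "m @ [y] @ ?mi" "[z]"] reduced_word_singleton
      using Cy(1) zl lmi zA mine letter_in_A_iff[OF zl] by simp
    have rU'': "reduced_word G A ?D U''" using rU' Cons by (simp add: reduced_word_Cons)
    have w2: "word_prod G ((m @ [y] @ ?mi) @ [z]) = d \<otimes> z"
      using word_prod_append[OF reduced_word_closed[OF Cy(1)], of "[z]"] zc Cy(2) y(2) by simp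
    show ?thesis
    proof (cases U'')
      case Nil
      then have "word_prod G U = d \<otimes> z" using U Cons zc by simp
      then show ?thesis using normal_form_word_prod[OF r2] w2 y(1) zA by fastforce
    next
      case (Cons z' U''')
      have hd: "hd U'' \<in> ?D"
        using rU' \<open>U' = z # U''\<close> zA Cons by (auto simp: reduced_word_Cons)
      have len: "length U'' < length U" using U \<open>U' = z # U''\<close> by simp
      obtain y' t' where IH: "normal_form G A B (word_prod G U'') = m @ [y'] @ ?mi @ t'"
        using less.hyps[OF len rU'' _ hd] Cons by blast
      have "set U'' \<subseteq> carrier G" using rU'' A_subset Dc unfolding reduced_word_def by blast
      then have U''c: "word_prod G U'' \<in> carrier G" by (rule word_prod_closed)
      define W where "W = normal_form G A B (word_prod G U'')"
      have rW: "reduced_word G A B W" and wW: "word_prod G W = word_prod G U''"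
        using normal_form_spec[OF U''c] by (simp_all add: W_def)
      have r3: "reduced_word G A B (((m @ [y] @ ?mi) @ [z]) @ W)"
        unfolding reduced_word_append[of G A B "(m @ [y] @ ?mi) @ [z]" W]
        using r2 rW IH mne hmA zA letter_in_A_iff[OF zl] by (simp add: W_def)
      have "word_prod G (((m @ [y] @ ?mi) @ [z]) @ W) = d \<otimes> z \<otimes> word_prod G U''"
        using word_prod_append[OF reduced_word_closed[OF r2] reduced_word_closed[OF rW]] w2 wW by simp
      also have "\<dots> = word_prod G U"
        using U \<open>U' = z # U''\<close> dc zc U''c by (simp add: m_assoc)
      finally show ?thesis
        using normal_form_word_prod[OF r3] y(1) zA by (intro exI[of _ y] exI[of _ "[z] @ W"]) simp
    qed
  qed
qed

text \<open>A nontrivial element of \<open>B\<close> has syllable length one, so it is not a product of a reduced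
  word over \<open>A\<close> and the conjugated factor.\<close>

lemma not_free_splitting_conjugate_word:
  assumes rm: "reduced_word G A B m" and mne: "m \<noteq> []" and hm: "hd m \<in> B" and lm: "last m \<in> A"
  shows "\<not> free_splitting G A (conjugate G (word_prod G m) ` B)"
proof
  let ?D = "conjugate G (word_prod G m) ` B"
  assume "free_splitting G A ?D"
  then interpret S: free_splitting G A ?D .
  obtain b where b: "b \<in> B" "b \<noteq> \<one>" using B_nontrivial subgroup.one_closed[OF subgroup_B] by blast
  have bl: "b \<in> letters" and bA: "b \<notin> A" using b A_Int_B by auto
  have bc: "b \<in> carrier G" using letter_closed[OF bl] .
  define V where "V = normal_form G A ?D b"
  have rV: "reduced_word G A ?D V" and wV: "word_prod G V = b"
    using S.normal_form_spec[OF bc] by (simp_all add: V_def)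
  have nb: "normal_form G A B b = [b]" using normal_form_letter[OF bl] .
  have long: "length (normal_form G A B (word_prod G U)) \<ge> 2"
    if U: "reduced_word G A ?D U" "U \<noteq> []" "hd U \<in> ?D" for U
  proof -
    obtain y t where "normal_form G A B (word_prod G U) = m @ [y] @ inv_word G m @ t"
      using normal_form_word_over_conjugate_factor[OF rm mne hm lm U] by blast
    then show ?thesis using mne by (cases m) auto
  qed
  show False
  proof (cases V)
    case Nil
    then show False using wV b by simp
  next
    case (Cons z V')
    have zl: "z \<in> A \<union> ?D" and rV': "reduced_word G A ?D V'"
      and ends: "V' \<noteq> [] \<Longrightarrow> \<not> (z \<in> A \<and> hd V' \<in> A) \<and> \<not> (z \<in> ?D \<and> hd V' \<in> ?D)"
      using rV Cons by (auto simp: reduced_word_Cons)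
    show False
    proof (cases "z \<in> A")
      case False
      then show False using long[OF rV] Cons zl wV nb by simp
    next
      case zA: True
      show False
      proof (cases V')
        case Nil
        then show False using wV Cons zA bA A_subset by auto
      next
        case (Cons z' V'')
        have hV': "hd V' \<in> ?D" using rV' ends zA Cons by (auto simp: reduced_word_Cons)
        obtain y t where Q: "normal_form G A B (word_prod G V') = m @ [y] @ inv_word G m @ t"
          using normal_form_word_over_conjugate_factor[OF rm mne hm lm rV' _ hV'] Cons by blast
        have V'c: "word_prod G V' \<in> carrier G"
          using normal_form_spec[of "word_prod G V'"] S.reduced_word_closed[OF rV'] word_prod_closed by blast
        have zl': "z \<in> letters" using zA zl rV \<open>V = z # V'\<close> by (auto simp: reduced_word_Cons)
        have "hd (normal_form G A B (word_prod G V')) \<notin> A"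
          using Q mne hm A_Int_B reduced_word_hd_letter[OF rm mne] by auto
        then have "normal_form G A B (z \<otimes> word_prod G V') = z # normal_form G A B (word_prod G V')"
          using normal_form_letter_mult[OF zl' normal_form_reduced[OF V'c]] word_prod_normal_form[OF V'c]
            zA Q by simp
        moreover have "z \<otimes> word_prod G V' = b" using wV \<open>V = z # V'\<close> by simp
        ultimately show False using nb Q by simp
      qed
    qed
  qed
qed

lemma splitting_conjugates_common_conjugator:
  assumes g0: "g0 \<in> carrier G" and h0: "h0 \<in> carrier G"
    and S': "free_splitting G (conjugate G g0 ` A) (conjugate G h0 ` B)"
  obtains k where "k \<in> carrier G" "conjugate G g0 ` A = conjugate G k ` A"
    "conjugate G h0 ` B = conjugate G k ` B"
proof -
  obtain a m b where a: "a \<in> A" and b: "b \<in> B" and rm: "reduced_word G A B m"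
    and e: "inv g0 \<otimes> h0 = a \<otimes> (word_prod G m \<otimes> b)" and ends: "m \<noteq> [] \<Longrightarrow> hd m \<in> B \<and> last m \<in> A"
    using double_coset_decomposition[of "inv g0 \<otimes> h0"] g0 h0 by blast
  have ac: "a \<in> carrier G" and bc: "b \<in> carrier G" using a b A_subset B_subset by auto
  have mc: "word_prod G m \<in> carrier G" using word_prod_closed[OF reduced_word_closed[OF rm]] .
  define k where "k = g0 \<otimes> a"
  have kc: "k \<in> carrier G" using g0 ac by (simp add: k_def)
  have kA: "conjugate G g0 ` A = conjugate G k ` A"
    using conjugate_image_conjugate_image[OF g0 ac A_subset] conjugate_image_subgroup[OF subgroup_A a]
    by (simp add: k_def)
  have "h0 = g0 \<otimes> (inv g0 \<otimes> h0)" using g0 h0 by simp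
  also have "\<dots> = k \<otimes> (word_prod G m \<otimes> b)" using e g0 ac mc bc by (simp add: k_def m_assoc)
  finally have h0_eq: "h0 = k \<otimes> (word_prod G m \<otimes> b)" .
  have "conjugate G h0 ` B = conjugate G k ` conjugate G (word_prod G m \<otimes> b) ` B"
    using h0_eq conjugate_image_conjugate_image[OF kc _ B_subset] mc bc by simp
  also have "\<dots> = conjugate G k ` conjugate G (word_prod G m) ` conjugate G b ` B"
    using conjugate_image_conjugate_image[OF mc bc B_subset] by simp
  finally have hB: "conjugate G h0 ` B = conjugate G k ` conjugate G (word_prod G m) ` B"
    using conjugate_image_subgroup[OF subgroup_B b] by simp
  show thesis
  proof (cases "m = []")
    case True
    then show thesis using that kc kA hB conjugate_by_one_image[OF B_subset] by simp
  next
    case False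
    interpret S': free_splitting G "conjugate G g0 ` A" "conjugate G h0 ` B" by (rule S')
    have "free_splitting G (conjugate G (inv k) ` conjugate G g0 ` A) (conjugate G (inv k) ` conjugate G h0 ` B)"
      using S'.free_splitting_conjugate kc by simp
    moreover have "conjugate G (inv k) ` conjugate G g0 ` A = A"
      using kA conjugate_inv_image[OF kc A_subset] by simp
    moreover have "conjugate G (inv k) ` conjugate G h0 ` B = conjugate G (word_prod G m) ` B"
    proof -
      have "conjugate G (word_prod G m) ` B \<subseteq> carrier G" using mc B_subset by auto
      then show ?thesis using hB conjugate_inv_image[OF kc] by simp
    qed
    ultimately show thesis using not_free_splitting_conjugate_word[OF rm False] ends[OF False] by simp
  qed
qed

end

lemma finite_splitting_factors_conjugate:
  assumes S: "free_splitting G A B" and finA: "finite A" and finB: "finite B"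
    and S': "free_splitting G A' B'"
  obtains g h where "g \<in> carrier G" "h \<in> carrier G"
    "(A = conjugate G g ` A' \<and> B = conjugate G h ` B') \<or> (A = conjugate G g ` B' \<and> B = conjugate G h ` A')"
proof -
  interpret S: free_splitting G A B by (rule S)
  interpret S': free_splitting G A' B' by (rule S')
  interpret T': free_splitting G B' A' by (rule S'.free_splitting_swap)
  obtain g where g: "g \<in> carrier G" and gA: "A \<subseteq> conjugate G g ` A' \<or> A \<subseteq> conjugate G g ` B'"
    using S'.finite_subgroup_conjugate_into_factor[OF S.subgroup_A finA] by blast
  obtain h where h: "h \<in> carrier G" and hB: "B \<subseteq> conjugate G h ` A' \<or> B \<subseteq> conjugate G h ` B'"
    using S'.finite_subgroup_conjugate_into_factor[OF S.subgroup_B finB] by blast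
  show thesis
  proof (cases "A \<subseteq> conjugate G g ` A'")
    case A1: True
    then have B2: "B \<subseteq> conjugate G h ` B'"
      using hB T'.splitting_factors_not_both_conjugate_into_B[OF S g h] by blast
    show thesis
      using that g h S'.splitting_factor_conjugate_into_A_eq[OF S finA g h A1 B2]
        T'.splitting_factor_conjugate_into_A_eq[OF S.free_splitting_swap finB h g B2 A1] by blast
  next
    case False
    then have A2: "A \<subseteq> conjugate G g ` B'" using gA by blast
    then have B1: "B \<subseteq> conjugate G h ` A'"
      using hB S'.splitting_factors_not_both_conjugate_into_B[OF S g h] by blast
    show thesis
      using that g h T'.splitting_factor_conjugate_into_A_eq[OF S finA g h A2 B1]
        S'.splitting_factor_conjugate_into_A_eq[OF S.free_splitting_swap finB h g B1 A2] by blast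
  qed
qed

lemma finite_splitting_unique_up_to_conjugacy:
  assumes S: "free_splitting G A B" and finA: "finite A" and finB: "finite B"
    and S': "free_splitting G A' B'"
  obtains k where "k \<in> carrier G"
    "(A' = conjugate G k ` A \<and> B' = conjugate G k ` B) \<or> (A' = conjugate G k ` B \<and> B' = conjugate G k ` A)"
proof -
  interpret S: free_splitting G A B by (rule S)
  interpret S': free_splitting G A' B' by (rule S')
  obtain g h where g: "g \<in> carrier G" and h: "h \<in> carrier G"
    and c: "(A = conjugate G g ` A' \<and> B = conjugate G h ` B') \<or> (A = conjugate G g ` B' \<and> B = conjugate G h ` A')"
    using finite_splitting_factors_conjugate[OF S finA finB S'] by blast
  have ig: "inv\<^bsub>G\<^esub> g \<in> carrier G" and ih: "inv\<^bsub>G\<^esub> h \<in> carrier G" using g h by simp_all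
  from c show thesis
  proof
    assume c1: "A = conjugate G g ` A' \<and> B = conjugate G h ` B'"
    have eA: "A' = conjugate G (inv\<^bsub>G\<^esub> g) ` A" using c1 S.conjugate_inv_image[OF g S'.A_subset] by simp
    have eB: "B' = conjugate G (inv\<^bsub>G\<^esub> h) ` B" using c1 S.conjugate_inv_image[OF h S'.B_subset] by simp
    obtain k where "k \<in> carrier G" "conjugate G (inv\<^bsub>G\<^esub> g) ` A = conjugate G k ` A"
      "conjugate G (inv\<^bsub>G\<^esub> h) ` B = conjugate G k ` B"
      using S.splitting_conjugates_common_conjugator[OF ig ih] S' eA eB by metis
    then show thesis using that eA eB by simp
  next
    assume c2: "A = conjugate G g ` B' \<and> B = conjugate G h ` A'"
    have eB: "B' = conjugate G (inv\<^bsub>G\<^esub> g) ` A" using c2 S.conjugate_inv_image[OF g S'.B_subset] by simp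
    have eA: "A' = conjugate G (inv\<^bsub>G\<^esub> h) ` B" using c2 S.conjugate_inv_image[OF h S'.A_subset] by simp
    obtain k where "k \<in> carrier G" "conjugate G (inv\<^bsub>G\<^esub> g) ` A = conjugate G k ` A"
      "conjugate G (inv\<^bsub>G\<^esub> h) ` B = conjugate G k ` B"
      using S.splitting_conjugates_common_conjugator[OF ig ih] S'.free_splitting_swap eA eB by metis
    then show thesis using that eA eB by simp
  qed
qed

section \<open>Split classes\<close>

lemma bclass_coboundary_subset:
  assumes "\<forall>z\<in>carrier G. \<bar>F' z - F z\<bar> \<le> C"
  shows "bclass G (qm_coboundary G F) \<subseteq> bclass G (qm_coboundary G F')"
proof
  fix c assume "c \<in> bclass G (qm_coboundary G F)"
  then obtain u M where u: "\<forall>x\<in>carrier G. \<bar>u x\<bar> \<le> M"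
    and c: "\<forall>x\<in>carrier G. \<forall>y\<in>carrier G.
              c x y = qm_coboundary G F x y + (u x + u y - u (x \<otimes>\<^bsub>G\<^esub> y))"
    unfolding bclass_def by blast
  define v where "v z = u z + F z - F' z" for z
  have "\<bar>v x\<bar> \<le> M + C" if "x \<in> carrier G" for x
    using u assms that unfolding v_def by fastforce
  moreover have "\<forall>x\<in>carrier G. \<forall>y\<in>carrier G.
      c x y = qm_coboundary G F' x y + (v x + v y - v (x \<otimes>\<^bsub>G\<^esub> y))"
    using c by (simp add: v_def qm_coboundary_def)
  ultimately show "c \<in> bclass G (qm_coboundary G F')" unfolding bclass_def by blast
qed

lemma omega_eq_if_bounded_difference:
  assumes "\<forall>z\<in>carrier G. \<bar>F' z - F z\<bar> \<le> C"
  shows "omega G F = omega G F'"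
proof -
  have "\<forall>z\<in>carrier G. \<bar>F z - F' z\<bar> \<le> C" using assms by (simp add: abs_minus_commute)
  then show ?thesis
    using bclass_coboundary_subset[OF assms] bclass_coboundary_subset[of G F F' C]
    unfolding omega_def by blast
qed

context group
begin

lemma bounded_alternating_conjugate:
  assumes f: "bounded_alternating G X f" and X: "X \<subseteq> carrier G" and k: "k \<in> carrier G"
  shows "bounded_alternating G (conjugate G k ` X) (f \<circ> conjugate G (inv k))"
proof -
  have cancel: "conjugate G (inv k) (conjugate G k x) = x" if "x \<in> X" for x
    using that X k by auto
  have "inv (conjugate G k x) = conjugate G k (inv x)" if "x \<in> X" for x
    using that X k inv_conjugate by auto
  then show ?thesis
    using f cancel X k unfolding bounded_alternating_def by (auto simp: subset_iff)
qed

end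

context free_splitting
begin

definition letter_value :: "('a \<Rightarrow> real) \<Rightarrow> ('a \<Rightarrow> real) \<Rightarrow> 'a \<Rightarrow> real" where
  "letter_value fA fB x = (if x \<in> A then fA x else fB x)"

lemma split_qm_eq_sum_letter_value:
  "split_qm G A B fA fB g = sum_list (map (letter_value fA fB) (normal_form G A B g))"
  unfolding split_qm_def letter_value_def ..

lemma split_qm_letter_mult_bound:
  assumes M: "\<forall>x\<in>letters. \<bar>letter_value fA fB x\<bar> \<le> M" and s: "s \<in> letters" and g: "g \<in> carrier G"
  shows "\<bar>split_qm G A B fA fB (s \<otimes> g) - split_qm G A B fA fB g\<bar> \<le> 2 * M"
proof -
  define w where "w = normal_form G A B g"
  let ?v = "letter_value fA fB"
  let ?S = "\<lambda>l. sum_list (map ?v l)"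
  have rw: "reduced_word G A B w" and gw: "g = word_prod G w"
    using normal_form_spec[OF g] by (simp_all add: w_def)
  have nf: "normal_form G A B (s \<otimes> g) =
    (if w = [] then [s] else if (s \<in> A \<longleftrightarrow> hd w \<in> A) then
       (if s \<otimes> hd w = \<one> then tl w else (s \<otimes> hd w) # tl w) else s # w)"
    using normal_form_letter_mult[OF s rw] gw by simp
  have Fg: "split_qm G A B fA fB g = ?S w"
    by (simp add: split_qm_eq_sum_letter_value w_def)
  have Fsg: "split_qm G A B fA fB (s \<otimes> g) = ?S (normal_form G A B (s \<otimes> g))"
    by (simp add: split_qm_eq_sum_letter_value)
  have ls: "\<bar>?v s\<bar> \<le> M" using M s by blast
  then have M0: "0 \<le> M" by linarith
  show ?thesis
  proof (cases w)
    case Nil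
    then show ?thesis using Fg Fsg nf ls M0 by simp
  next
    case (Cons y w')
    have yl: "y \<in> letters" using reduced_word_hd_letter[OF rw] Cons by simp
    have ly: "\<bar>?v y\<bar> \<le> M" using M yl by blast
    consider (diff) "\<not> (s \<in> A \<longleftrightarrow> y \<in> A)" | (cancel) "s \<in> A \<longleftrightarrow> y \<in> A" "s \<otimes> y = \<one>"
      | (merge) "s \<in> A \<longleftrightarrow> y \<in> A" "s \<otimes> y \<noteq> \<one>"
      by blast
    then show ?thesis
    proof cases
      case diff
      then show ?thesis using Fg Fsg nf Cons ls M0 by simp
    next
      case cancel
      then show ?thesis using Fg Fsg nf Cons ly M0 by simp
    next
      case merge
      have "\<bar>?v (s \<otimes> y)\<bar> \<le> M" using M letter_mult_same_factor[OF s yl merge] by blast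
      then show ?thesis using Fg Fsg nf Cons ly merge by simp
    qed
  qed
qed

lemma split_qm_left_mult_bound:
  assumes M: "\<forall>x\<in>letters. \<bar>letter_value fA fB x\<bar> \<le> M" and k: "k \<in> carrier G" and g: "g \<in> carrier G"
  shows "\<bar>split_qm G A B fA fB (k \<otimes> g) - split_qm G A B fA fB g\<bar> \<le> 2 * M * syllable_length k"
proof -
  let ?F = "split_qm G A B fA fB"
  have "\<bar>?F (word_prod G w \<otimes> g) - ?F g\<bar> \<le> 2 * M * length w" if "reduced_word G A B w" for w
    using that
  proof (induction w)
    case (Cons s w)
    have s: "s \<in> letters" and rw: "reduced_word G A B w"
      using Cons.prems by (auto simp: reduced_word_Cons)
    have wc: "word_prod G w \<in> carrier G" using word_prod_closed[OF reduced_word_closed[OF rw]] .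
    have "word_prod G (s # w) \<otimes> g = s \<otimes> (word_prod G w \<otimes> g)"
      using letter_closed[OF s] wc g by (simp add: m_assoc)
    then show ?case
      using split_qm_letter_mult_bound[OF M s, of "word_prod G w \<otimes> g"] Cons.IH[OF rw] wc g
      by (simp add: algebra_simps)
  qed (simp add: g)
  from this[OF normal_form_reduced[OF k]] show ?thesis
    using word_prod_normal_form[OF k] by (simp add: syllable_length_def)
qed

lemma split_qm_inv:
  assumes fA: "\<forall>x\<in>A. fA (inv x) = - fA x" and fB: "\<forall>x\<in>B. fB (inv x) = - fB x"
    and g: "g \<in> carrier G"
  shows "split_qm G A B fA fB (inv g) = - split_qm G A B fA fB g"
proof -
  define w where "w = normal_form G A B g"
  have rw: "reduced_word G A B w" using normal_form_reduced[OF g] by (simp add: w_def)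
  have inv_value: "letter_value fA fB (inv x) = - letter_value fA fB x" if "x \<in> set w" for x
  proof -
    have xl: "x \<in> letters" using rw that unfolding reduced_word_def by blast
    then show ?thesis
      using fA fB inv_in_A_iff[OF letter_closed[OF xl]] unfolding letter_value_def by auto
  qed
  have "split_qm G A B fA fB (inv g) = sum_list (map (\<lambda>x. letter_value fA fB (inv x)) (rev w))"
    using normal_form_inv[OF g] by (simp add: split_qm_eq_sum_letter_value w_def inv_word_def rev_map o_def)
  also have "\<dots> = sum_list (map (\<lambda>x. letter_value fA fB (inv x)) w)"
    by (metis rev_map sum_list_rev)
  also have "\<dots> = - sum_list (map (letter_value fA fB) w)"
    using inv_value by (induction w) auto
  finally show ?thesis by (simp add: split_qm_eq_sum_letter_value w_def)
qed

lemma split_qm_conjugate_bound: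
  assumes M: "\<forall>x\<in>letters. \<bar>letter_value fA fB x\<bar> \<le> M"
    and fA: "\<forall>x\<in>A. fA (inv x) = - fA x" and fB: "\<forall>x\<in>B. fB (inv x) = - fB x"
    and k: "k \<in> carrier G" and x: "x \<in> carrier G"
  shows "\<bar>split_qm G A B fA fB (conjugate G k x) - split_qm G A B fA fB x\<bar> \<le> 4 * M * syllable_length k"
proof -
  let ?F = "split_qm G A B fA fB" and ?L = "syllable_length k"
  have kx: "k \<otimes> x \<in> carrier G" using k x by simp
  have "k \<otimes> inv (k \<otimes> x) = inv (conjugate G k x)"
    unfolding conjugate_def using k x by (simp add: inv_mult_group m_assoc)
  then have "\<bar>?F (inv (conjugate G k x)) - ?F (inv (k \<otimes> x))\<bar> \<le> 2 * M * ?L"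
    using split_qm_left_mult_bound[OF M k inv_closed[OF kx]] by simp
  then have "\<bar>?F (conjugate G k x) - ?F (k \<otimes> x)\<bar> \<le> 2 * M * ?L"
    using split_qm_inv[OF fA fB] k x kx by (simp add: abs_minus_commute)
  then show ?thesis using split_qm_left_mult_bound[OF M k x] by linarith
qed

text \<open>Conjugation by \<open>k\<close> carries normal forms for \<open>A * B\<close> to normal forms for \<open>kAk\<inverse> * kBk\<inverse>\<close>.\<close>

lemma split_qm_conjugate:
  assumes k: "k \<in> carrier G" and z: "z \<in> carrier G"
  shows "split_qm G (conjugate G k ` A) (conjugate G k ` B)
           (fA \<circ> conjugate G (inv k)) (fB \<circ> conjugate G (inv k)) z =
         split_qm G A B fA fB (conjugate G (inv k) z)"
proof -
  interpret S: free_splitting G "conjugate G k ` A" "conjugate G k ` B"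
    by (rule free_splitting_conjugate[OF k])
  define x where "x = conjugate G (inv k) z"
  define w where "w = normal_form G A B x"
  have xc: "x \<in> carrier G" using z k by (simp add: x_def)
  have rw: "reduced_word G A B w" and wc: "set w \<subseteq> carrier G"
    using normal_form_reduced[OF xc] normal_form_closed[OF xc] by (simp_all add: w_def)
  have "word_prod G (map (conjugate G k) w) = z"
    using word_prod_map_conjugate[OF k wc] word_prod_normal_form[OF xc] z k by (simp add: w_def x_def)
  then have nz: "normal_form G (conjugate G k ` A) (conjugate G k ` B) z = map (conjugate G k) w"
    using S.normal_form_eq reduced_word_map_conjugate[OF rw k A_subset B_subset] by blast
  have "(if conjugate G k y \<in> conjugate G k ` A then (fA \<circ> conjugate G (inv k)) (conjugate G k y)
          else (fB \<circ> conjugate G (inv k)) (conjugate G k y)) = letter_value fA fB y"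
    if "y \<in> set w" for y
  proof -
    have "y \<in> carrier G" using that wc by blast
    then show ?thesis using conjugate_mem_image_iff[OF k A_subset] k by (simp add: letter_value_def)
  qed
  then have "split_qm G (conjugate G k ` A) (conjugate G k ` B)
           (fA \<circ> conjugate G (inv k)) (fB \<circ> conjugate G (inv k)) z =
         sum_list (map (letter_value fA fB) w)"
    unfolding split_qm_def nz map_map by (intro arg_cong[where f = sum_list] map_cong refl) simp
  then show ?thesis by (simp add: split_qm_eq_sum_letter_value w_def x_def)
qed

lemma split_classes_conjugate_subset:
  assumes k: "k \<in> carrier G"
  shows "split_classes G A B \<subseteq> split_classes G (conjugate G k ` A) (conjugate G k ` B)"
proof
  fix cl assume "cl \<in> split_classes G A B"
  then obtain fA fB where cl: "cl = omega G (split_qm G A B fA fB)"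
    and bA: "bounded_alternating G A fA" and bB: "bounded_alternating G B fB"
    unfolding split_classes_def by blast
  obtain MA MB where MA: "\<forall>x\<in>A. \<bar>fA x\<bar> \<le> MA" and MB: "\<forall>x\<in>B. \<bar>fB x\<bar> \<le> MB"
    and aA: "\<forall>x\<in>A. fA (inv x) = - fA x" and aB: "\<forall>x\<in>B. fB (inv x) = - fB x"
    using bA bB unfolding bounded_alternating_def by blast
  have M: "\<forall>x\<in>letters. \<bar>letter_value fA fB x\<bar> \<le> max MA MB"
    using MA MB by (auto simp: letter_value_def le_max_iff_disj)
  let ?F' = "split_qm G (conjugate G k ` A) (conjugate G k ` B)
               (fA \<circ> conjugate G (inv k)) (fB \<circ> conjugate G (inv k))"
  have "\<forall>z\<in>carrier G. \<bar>?F' z - split_qm G A B fA fB z\<bar> \<le> 4 * max MA MB * syllable_length (inv k)"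
    using split_qm_conjugate[OF k] split_qm_conjugate_bound[OF M aA aB inv_closed[OF k]] k
    by (simp add: conjugate_def)
  then have "cl = omega G ?F'" using cl omega_eq_if_bounded_difference by blast
  then show "cl \<in> split_classes G (conjugate G k ` A) (conjugate G k ` B)"
    using bounded_alternating_conjugate[OF _ _ k] bA bB A_subset B_subset
    unfolding split_classes_def by blast
qed

lemma split_classes_conjugate:
  assumes k: "k \<in> carrier G"
  shows "split_classes G (conjugate G k ` A) (conjugate G k ` B) = split_classes G A B"
proof
  interpret S: free_splitting G "conjugate G k ` A" "conjugate G k ` B"
    by (rule free_splitting_conjugate[OF k])
  show "split_classes G (conjugate G k ` A) (conjugate G k ` B) \<subseteq> split_classes G A B"
    using S.split_classes_conjugate_subset[of "inv k"] k conjugate_inv_image A_subset B_subset by simp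
qed (rule split_classes_conjugate_subset[OF k])

lemma split_qm_swap:
  assumes g: "g \<in> carrier G"
  shows "split_qm G A B fA fB g = split_qm G B A fB fA g"
proof -
  have "(if x \<in> A then fA x else fB x) = (if x \<in> B then fB x else fA x)"
    if "x \<in> set (normal_form G A B g)" for x
  proof -
    have "x \<in> letters" using normal_form_reduced[OF g] that unfolding reduced_word_def by blast
    then show ?thesis using letter_in_A_iff[of x] by auto
  qed
  then show ?thesis
    unfolding split_qm_def normal_form_swap[of G A B, symmetric] by (simp cong: map_cong)
qed

lemma split_classes_swap: "split_classes G A B = split_classes G B A"
proof -
  have e: "omega G (split_qm G A B fA fB) = omega G (split_qm G B A fB fA)" for fA fB
    using omega_eq_if_bounded_difference[of G "split_qm G A B fA fB" "split_qm G B A fB fA" 0]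
      split_qm_swap by simp
  show ?thesis
    unfolding split_classes_def
  proof (intro equalityI subsetI)
    fix cl assume "cl \<in> {omega G (split_qm G A B fA fB) |fA fB.
                        bounded_alternating G A fA \<and> bounded_alternating G B fB}"
    then obtain fA fB where "cl = omega G (split_qm G A B fA fB)"
      "bounded_alternating G A fA" "bounded_alternating G B fB" by blast
    then show "cl \<in> {omega G (split_qm G B A fA fB) |fA fB.
                        bounded_alternating G B fA \<and> bounded_alternating G A fB}"
      using e by blast
  next
    fix cl assume "cl \<in> {omega G (split_qm G B A fA fB) |fA fB.
                        bounded_alternating G B fA \<and> bounded_alternating G A fB}"
    then obtain fA fB where "cl = omega G (split_qm G B A fA fB)"
      "bounded_alternating G B fA" "bounded_alternating G A fB" by blast
    then show "cl \<in> {omega G (split_qm G A B fA fB) |fA fB.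
                        bounded_alternating G A fA \<and> bounded_alternating G B fB}"
      using e[of fB fA] by blast
  qed
qed

end

theorem proposition3p16:
  fixes G :: "('a, 'b) monoid_scheme" and A B A' B' :: "'a set"
  assumes "group G"
    and "is_splitting G A B" and "finite A" and "finite B"
    and "is_splitting G A' B'"
  shows "split_classes G A B = split_classes G A' B'"
proof -
  have S: "free_splitting G A B" and S': "free_splitting G A' B'"
    using assms by (simp_all add: free_splitting_def free_splitting_axioms_def)
  interpret S: free_splitting G A B by (rule S)
  interpret T: free_splitting G B A by (rule S.free_splitting_swap)
  obtain k where k: "k \<in> carrier G" and
    "(A' = conjugate G k ` A \<and> B' = conjugate G k ` B) \<or> (A' = conjugate G k ` B \<and> B' = conjugate G k ` A)"
    using finite_splitting_unique_up_to_conjugacy[OF S assms(3,4) S'] by blast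
  then show ?thesis
    using S.split_classes_conjugate[OF k] T.split_classes_conjugate[OF k] S.split_classes_swap by auto
qed

end
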